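(* Let $E\in\mathcal{C}(J,\{c_k\},\{n_k\},\{a_k\})$ be a Cantor-like set and let $0<\theta<1$. Then $$\dim_L^\theta E=\liminf_{k\to+\infty}\frac{\log (n_{k+1}\cdots n_{l(\theta,k)})}{(1-\frac1\theta)\log\delta_k},$$ where $\delta_k=\prod_{i=1}^k c_i$ and $l(\theta,k)=\max\{l\in\mathbb{Z}^+:\delta_l\ge(\delta_k)^{1/\theta}\}$ for $k\ge1$.
   Context: Cantor-like sets: let $\{a_k\}_{k\ge1}\subset\mathbb{R}^+$ with $\sum_k a_k<+\infty$; $\{n_k\}\subset\mathbb{Z}^+$ with $n_k\ge2$; $\{c_k\}\subset\mathbb{R}^+$ with $0<c_k<1$ and $\inf_k c_k>0$. Words: $\Omega_0=\{\emptyset\}$, $\Omega_k=\{\sigma_1\cdots\sigma_k:1\le\sigma_j\le n_j\}$, $\Omega=\bigcup_k\Omega_k$, with concatenation $\sigma*j$. Let $J\subset\mathbb{R}^n$ be a closed set of finite diameter with nonempty interior, $J_\emptyset=J$. Sets $J_\sigma$, $\sigma\in\Omega$, are such that for every $k\ge1$ and $\sigma\in\Omega_{k-1}$, $J_{\sigma*1},\dots,J_{\sigma*n_k}\subset J_\sigma$ are each geometrically similar to $J_\sigma$, have pairwise disjoint interiors, and satisfy $c_k(1-a_k)\le |J_{\sigma*j}|/|J_\sigma|\le c_k(1+a_k)$ ($|\cdot|$ = diameter). Then $E=\bigcap_{k\ge1}\bigcup_{\sigma\in\Omega_k}J_\sigma$ is a Cantor-like set, and $\mathcal{C}(J,\{c_k\},\{n_k\},\{a_k\})$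 denotes the class of all such sets. For $F\subset\mathbb{R}^n$, $N_r(A)$ is the smallest number of balls of radius $r$ covering $A$, and the lower spectrum is $\dim_L^\theta F=\sup\{s\ge0:\exists\, b,c>0\ \forall\,0<R<b,\ \forall x\in F,\ N_{R^{1/\theta}}(B(x,R)\cap F)\ge c(R/R^{1/\theta})^s\}$. *)

theory Defs
  imports "HOL-Analysis.Analysis"
begin

(* Omega_k: words sigma_1 ... sigma_k with 1 <= sigma_j <= n_j, encoded as lists;
   the j-th letter (1-based) is sigma ! (j-1). Concatenation sigma*j is sigma @ [j]. *)
definition words :: "(nat \<Rightarrow> nat) \<Rightarrow> nat \<Rightarrow> nat list set" where
  "words nk k = {\<sigma>. length \<sigma> = k \<and> (\<forall>i<k. 1 \<le> \<sigma> ! i \<and> \<sigma> ! i \<le> nk (Suc i))}"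

definition geom_similar :: "'a::euclidean_space set \<Rightarrow> 'a set \<Rightarrow> bool" where
  "geom_similar A B \<longleftrightarrow>
     (\<exists>r>0. \<exists>f::'a \<Rightarrow> 'a. (\<forall>x y. dist (f x) (f y) = r * dist x y) \<and> f ` A = B)"

(* E belongs to the class C(J,{c_k},{n_k},{a_k}) (sequences indexed from 1) *)
definition cantor_like_class ::
  "'a::euclidean_space set \<Rightarrow> (nat \<Rightarrow> real) \<Rightarrow> (nat \<Rightarrow> nat) \<Rightarrow> (nat \<Rightarrow> real) \<Rightarrow> 'a set set" where
  "cantor_like_class J c nk a =
    {E. \<exists>JS :: nat list \<Rightarrow> 'a set.
        JS [] = J \<and>
        (\<forall>k\<ge>1. \<forall>\<sigma>\<in>words nk (k - 1).
           (\<forall>j\<in>{1..nk k}.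
              JS (\<sigma> @ [j]) \<subseteq> JS \<sigma> \<and>
              geom_similar (JS \<sigma>) (JS (\<sigma> @ [j])) \<and>
              c k * (1 - a k) \<le> diameter (JS (\<sigma> @ [j])) / diameter (JS \<sigma>) \<and>
              diameter (JS (\<sigma> @ [j])) / diameter (JS \<sigma>) \<le> c k * (1 + a k)) \<and>
           (\<forall>j\<in>{1..nk k}. \<forall>j'\<in>{1..nk k}. j \<noteq> j' \<longrightarrow>
              interior (JS (\<sigma> @ [j])) \<inter> interior (JS (\<sigma> @ [j'])) = {})) \<and>
        E = (\<Inter>k\<in>{1..}. \<Union>\<sigma>\<in>words nk k. JS \<sigma>)}"

definition covering_number :: "real \<Rightarrow> 'a::metric_space set \<Rightarrow> nat" where
  "covering_number r A =
     (LEAST m. \<exists>C. finite C \<and> card C = m \<and> A \<subseteq> (\<Union>x\<in>C. cball x r))"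

definition lower_spectrum :: "real \<Rightarrow> 'a::metric_space set \<Rightarrow> ereal" where
  "lower_spectrum \<theta> F = Sup (ereal ` {s. s \<ge> 0 \<and>
     (\<exists>b>0. \<exists>C>0. \<forall>R. 0 < R \<and> R < b \<longrightarrow> (\<forall>x\<in>F.
        real (covering_number (R powr (1/\<theta>)) (cball x R \<inter> F))
          \<ge> C * (R / R powr (1/\<theta>)) powr s))})"

definition delta :: "(nat \<Rightarrow> real) \<Rightarrow> nat \<Rightarrow> real" where
  "delta c k = (\<Prod>i\<in>{1..k}. c i)"

definition l_index :: "(nat \<Rightarrow> real) \<Rightarrow> real \<Rightarrow> nat \<Rightarrow> nat" where
  "l_index c \<theta> k = (GREATEST l. l \<ge> 1 \<and> delta c l \<ge> delta c k powr (1/\<theta>))"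

end

(* Every cylinder J_sigma is similar to J, so it contains a ball of radius proportional to its
   diameter, and since sum a_k < oo the level-k cylinders have diameters comparable to
   delta_k.  Packing the n_k similar children into their parent and comparing volumes gives
   n_k (c_k (1 - a_k))^d <= 1; hence eventually c_k^d <= 2/3 and n_k is bounded, and a ball of
   radius comparable to delta_l meets boundedly many level-l cylinders.
   For R ~ delta_k, the ball B(x,R) contains the level-k cylinder at x, whose
   n_(k+1)...n_l(theta,k) descendants of level l(theta,k) all meet E and have size
   ~ R^(1/theta); hence N_(R^(1/theta))(B(x,R) cap E) >~ n_(k+1)...n_l(theta,k).  Conversely
   B(x,delta_k) meets boundedly many level-k cylinders, whose descendants a bounded number of
   levels below l(theta,k) are smaller than delta_k^(1/theta), which gives the matching upper
   bound.  Taking logarithms, the admissible exponents in the definition of the lower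
   spectrum are exactly the numbers below the liminf. *)

theory Submission
  imports Defs
begin

section \<open>Similarity maps\<close>

lemma dist_scaling_surj:
  fixes f :: "'a::euclidean_space \<Rightarrow> 'a"
  assumes f: "\<forall>x y. dist (f x) (f y) = r * dist x y" and r: "r > 0"
  shows "surj f"
proof -
  define Q where "Q x = (1/r) *\<^sub>R (f x - f 0)" for x
  have "orthogonal_transformation Q"
    unfolding orthogonal_transformation_isometry
  proof (intro conjI allI)
    show "Q 0 = 0" by (simp add: Q_def)
    fix x y
    have "dist (Q x) (Q y) = (1/r) * norm (f x - f y)"
      using r by (simp add: Q_def dist_norm scaleR_diff_right[symmetric] abs_of_pos)
    also have "\<dots> = dist x y" using f r by (simp add: dist_norm[symmetric] abs_of_pos)
    finally show "dist (Q x) (Q y) = dist x y" .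
  qed
  then have "surj Q" by (rule orthogonal_transformation_surj)
  show ?thesis
  proof (rule surjI)
    fix y
    obtain z where "Q z = (1/r) *\<^sub>R (y - f 0)" using \<open>surj Q\<close> by (metis surjD)
    then have "f z = y" using r by (simp add: Q_def)
    then show "f (inv f y) = y" by (metis f_inv_into_f rangeI)
  qed
qed

lemma dist_scaling_image_ball:
  fixes f :: "'a::euclidean_space \<Rightarrow> 'a"
  assumes f: "\<forall>x y. dist (f x) (f y) = r * dist x y" and r: "r > 0"
  shows "f ` ball x e = ball (f x) (r * e)"
proof (intro equalityI subsetI)
  fix y assume "y \<in> f ` ball x e"
  then show "y \<in> ball (f x) (r * e)" using f r by auto
next
  fix y assume y: "y \<in> ball (f x) (r * e)"
  obtain z where z: "y = f z" using dist_scaling_surj[OF f r] by (metis surjD)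
  have "r * dist x z < r * e" using y f z by auto
  then have "dist x z < e" using r by simp
  then show "y \<in> f ` ball x e" using z by auto
qed

lemma dist_scaling_bounded_image:
  fixes f :: "'a::metric_space \<Rightarrow> 'b::metric_space"
  assumes f: "\<forall>x y. dist (f x) (f y) = r * dist x y" and r: "r > 0" and A: "bounded A"
  shows "bounded (f ` A)"
proof -
  obtain z R where "\<forall>x\<in>A. dist z x \<le> R" using A unfolding bounded_def by blast
  then have "\<forall>y\<in>f ` A. dist (f z) y \<le> r * R" using f r by auto
  then show ?thesis unfolding bounded_def by blast
qed

lemma dist_scaling_diameter:
  fixes f :: "'a::real_normed_vector \<Rightarrow> 'b::real_normed_vector"
  assumes f: "\<forall>x y. dist (f x) (f y) = r * dist x y" and r: "r > 0" and A: "bounded A"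
  shows "diameter (f ` A) = r * diameter A"
proof -
  have bB: "bounded (f ` A)" using dist_scaling_bounded_image[OF f r A] .
  have "diameter (f ` A) \<le> r * diameter A"
  proof (rule diameter_le)
    show "f ` A \<noteq> {} \<or> 0 \<le> r * diameter A" using diameter_ge_0[OF A] r by simp
    fix u v assume "u \<in> f ` A" "v \<in> f ` A"
    then obtain x y where "x \<in> A" "y \<in> A" "u = f x" "v = f y" by blast
    then show "norm (u - v) \<le> r * diameter A"
      using f r diameter_bounded_bound[OF A, of x y] by (simp add: dist_norm[symmetric] mult_left_mono)
  qed
  moreover have "diameter A \<le> diameter (f ` A) / r"
  proof (rule diameter_le)
    show "A \<noteq> {} \<or> 0 \<le> diameter (f ` A) / r" using r diameter_ge_0[OF bB] by simp
    fix x y assume "x \<in> A" "y \<in> A"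
    then have "dist (f x) (f y) \<le> diameter (f ` A)" by (intro diameter_bounded_bound[OF bB]) auto
    then show "norm (x - y) \<le> diameter (f ` A) / r"
      using f r by (simp add: dist_norm[symmetric] pos_le_divide_eq mult.commute)
  qed
  then have "r * diameter A \<le> diameter (f ` A)" using r by (simp add: pos_le_divide_eq mult.commute)
  ultimately show ?thesis by linarith
qed

lemma geom_similarI:
  assumes "r > 0" "\<forall>x y. dist (f x) (f y) = r * dist x y" "f ` A = B"
  shows "geom_similar A B"
  unfolding geom_similar_def using assms by blast

lemma geom_similarE:
  assumes "geom_similar A B"
  obtains r f where "r > 0" "\<forall>x y. dist (f x) (f y) = r * dist x y" "f ` A = B"
  using assms unfolding geom_similar_def by blast

lemma geom_similar_refl: "geom_similar A A"
  by (rule geom_similarI[of 1 id]) auto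

lemma geom_similar_trans:
  assumes "geom_similar A B" "geom_similar B C"
  shows "geom_similar A C"
proof -
  obtain r f where r: "r > 0" and f: "\<forall>x y. dist (f x) (f y) = r * dist x y" and B: "f ` A = B"
    using assms(1) by (rule geom_similarE)
  obtain r' g where r': "r' > 0" and g: "\<forall>x y. dist (g x) (g y) = r' * dist x y" and C: "g ` B = C"
    using assms(2) by (rule geom_similarE)
  show ?thesis
  proof (rule geom_similarI[of "r' * r" "g \<circ> f"])
    show "r' * r > 0" using r r' by simp
    show "\<forall>x y. dist ((g \<circ> f) x) ((g \<circ> f) y) = r' * r * dist x y" using f g by simp
    show "(g \<circ> f) ` A = C" unfolding image_comp[symmetric] using B C by simp
  qed
qed

lemma geom_similar_compact:
  assumes "geom_similar A B" "compact A"
  shows "compact B"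
proof -
  obtain r f where r: "r > 0" and f: "\<forall>x y. dist (f x) (f y) = r * dist x y" and B: "f ` A = B"
    using assms(1) by (rule geom_similarE)
  have "continuous_on A f"
    by (rule lipschitz_on_continuous_on[of r]) (rule lipschitz_onI, use f r in auto)
  then show ?thesis using compact_continuous_image assms(2) B by blast
qed

lemma geom_similar_diameter:
  assumes "geom_similar A B" "bounded A"
  obtains r where "r > 0" "diameter B = r * diameter A"
proof -
  obtain r f where r: "r > 0" and f: "\<forall>x y. dist (f x) (f y) = r * dist x y" and B: "f ` A = B"
    using assms(1) by (rule geom_similarE)
  then show thesis using that dist_scaling_diameter[OF f r assms(2)] by simp
qed

section \<open>Packings of balls\<close>

lemma subset_cball_diameter:
  assumes "bounded S" "x \<in> S" "diameter S \<le> R"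
  shows "S \<subseteq> cball x R"
proof
  fix y assume "y \<in> S"
  then have "dist x y \<le> diameter S" by (rule diameter_bounded_bound[OF assms(1,2)])
  then show "y \<in> cball x R" using assms(3) by simp
qed

definition ball_packing :: "'a::metric_space set \<Rightarrow> nat \<Rightarrow> real \<Rightarrow> bool" where
  "ball_packing A p s \<longleftrightarrow> (\<exists>S. finite S \<and> card S = p \<and> (\<forall>x\<in>S. ball x (s * diameter A) \<subseteq> A) \<and>
     (\<forall>x\<in>S. \<forall>y\<in>S. x \<noteq> y \<longrightarrow> ball x (s * diameter A) \<inter> ball y (s * diameter A) = {}))"

lemma ball_packing_1_iff: "ball_packing A 1 s \<longleftrightarrow> (\<exists>y. ball y (s * diameter A) \<subseteq> A)"
proof
  assume "ball_packing A 1 s"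
  then obtain S where S: "card S = 1" "\<forall>x\<in>S. ball x (s * diameter A) \<subseteq> A"
    unfolding ball_packing_def by auto
  from S(1) obtain y where "S = {y}" by (rule card_1_singletonE)
  then show "\<exists>y. ball y (s * diameter A) \<subseteq> A" using S(2) by blast
next
  assume "\<exists>y. ball y (s * diameter A) \<subseteq> A"
  then obtain y where "ball y (s * diameter A) \<subseteq> A" by blast
  then show "ball_packing A 1 s" unfolding ball_packing_def by (intro exI[of _ "{y}"]) simp
qed

lemma ball_packing_geom_similar:
  fixes A B :: "'a::euclidean_space set"
  assumes AB: "geom_similar A B" and A: "bounded A" and pA: "ball_packing A p s"
  shows "ball_packing B p s"
proof -
  obtain r f where r: "r > 0" and f: "\<forall>x y. dist (f x) (f y) = r * dist x y" and B: "f ` A = B"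
    using AB by (rule geom_similarE)
  obtain S where S: "finite S" "card S = p" "\<forall>x\<in>S. ball x (s * diameter A) \<subseteq> A"
    "\<forall>x\<in>S. \<forall>y\<in>S. x \<noteq> y \<longrightarrow> ball x (s * diameter A) \<inter> ball y (s * diameter A) = {}"
    using pA unfolding ball_packing_def by blast
  have inj: "inj f" by (rule injI) (metis f r dist_eq_0_iff mult_eq_0_iff less_irrefl)
  have ball_image: "ball (f x) (s * diameter B) = f ` ball x (s * diameter A)" for x
    using dist_scaling_image_ball[OF f r, of x "s * diameter A"] dist_scaling_diameter[OF f r A] B
    by (simp add: algebra_simps)
  show ?thesis unfolding ball_packing_def
  proof (intro exI[of _ "f ` S"] conjI ballI impI)
    show "finite (f ` S)" using S by simp
    show "card (f ` S) = p" using S card_image[OF inj_on_subset[OF inj]] by auto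
    fix u assume "u \<in> f ` S"
    then obtain x where x: "x \<in> S" "u = f x" by blast
    then show "ball u (s * diameter B) \<subseteq> B" using S(3) ball_image[of x] B by (metis image_mono)
    fix v assume "v \<in> f ` S" "u \<noteq> v"
    then obtain y where y: "y \<in> S" "v = f y" "x \<noteq> y" using x by blast
    have "f ` ball x (s * diameter A) \<inter> f ` ball y (s * diameter A) = {}"
      using S(4) x y image_Int[OF inj, symmetric] by auto
    then show "ball u (s * diameter B) \<inter> ball v (s * diameter B) = {}" using ball_image x y by simp
  qed
qed

lemma card_disjoint_balls_le:
  fixes x :: "'i \<Rightarrow> 'a::euclidean_space"
  assumes I: "finite I" and t: "t > 0" and R: "0 \<le> R"
    and sub: "\<And>i. i \<in> I \<Longrightarrow> ball (x i) t \<subseteq> cball z R"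
    and dis: "\<And>i j. i \<in> I \<Longrightarrow> j \<in> I \<Longrightarrow> i \<noteq> j \<Longrightarrow> ball (x i) t \<inter> ball (x j) t = {}"
  shows "real (card I) * t ^ DIM('a) \<le> R ^ DIM('a)"
proof -
  define w where "w = measure lborel (ball (0::'a) 1)"
  have w: "w > 0" unfolding w_def by (rule content_ball_pos) simp
  have "measure lborel (\<Union>i\<in>I. ball (x i) t) = (\<Sum>i\<in>I. measure lborel (ball (x i) t))"
  proof (rule measure_finite_Union[OF I])
    show "disjoint_family_on (\<lambda>i. ball (x i) t) I"
      unfolding disjoint_family_on_def using dis by blast
    show "emeasure lborel (ball (x i) t) \<noteq> \<infinity>" for i
      using emeasure_lborel_ball_finite[of "x i" t] by simp
  qed auto
  also have "\<dots> = real (card I) * t ^ DIM('a) * w"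
    using t by (simp add: w_def content_ball_conv_unit_ball[of t])
  finally have eq: "measure lborel (\<Union>i\<in>I. ball (x i) t) = real (card I) * t ^ DIM('a) * w" .
  have "measure lborel (\<Union>i\<in>I. ball (x i) t) \<le> measure lborel (cball z R)"
    using sub by (intro measure_mono_fmeasurable) (auto simp: borel_open open_UN fmeasurable_compact)
  also have "\<dots> = R ^ DIM('a) * w"
    unfolding w_def content_cball_conv_ball by (rule content_ball_conv_unit_ball) (rule R)
  finally show ?thesis using eq w by simp
qed

lemma ball_packing_card_le:
  fixes A :: "'a::euclidean_space set"
  assumes "ball_packing A p s" "s > 0" "diameter A > 0" "A \<subseteq> cball z R" "0 \<le> R"
  shows "real p * (s * diameter A) ^ DIM('a) \<le> R ^ DIM('a)"
proof -
  obtain S where "finite S" "card S = p" "\<forall>x\<in>S. ball x (s * diameter A) \<subseteq> A"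
    "\<forall>x\<in>S. \<forall>y\<in>S. x \<noteq> y \<longrightarrow> ball x (s * diameter A) \<inter> ball y (s * diameter A) = {}"
    using assms(1) unfolding ball_packing_def by blast
  moreover have "ball x (s * diameter A) \<subseteq> cball z R" if "x \<in> S" for x
    using that \<open>\<forall>x\<in>S. ball x (s * diameter A) \<subseteq> A\<close> assms(4) by blast
  ultimately show ?thesis
    using card_disjoint_balls_le[of S "s * diameter A" R "\<lambda>x. x" z] assms(2,3,5) by simp
qed

lemma ball_packing_UN:
  fixes A :: "'a::euclidean_space set" and B :: "'i \<Rightarrow> 'a set"
  assumes I: "finite I" and sub: "\<And>j. j \<in> I \<Longrightarrow> B j \<subseteq> A"
    and dis: "\<And>i j. i \<in> I \<Longrightarrow> j \<in> I \<Longrightarrow> i \<noteq> j \<Longrightarrow> interior (B i) \<inter> interior (B j) = {}"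
    and packB: "\<And>j. j \<in> I \<Longrightarrow> ball_packing (B j) p s"
    and rd: "\<And>j. j \<in> I \<Longrightarrow> r * diameter A \<le> diameter (B j)"
    and s: "s > 0" and r: "r > 0" and dA: "diameter A > 0"
  shows "ball_packing A (card I * p) (s * r)"
proof -
  define \<rho> where "\<rho> = s * r * diameter A"
  have "\<rho> > 0" using s r dA by (simp add: \<rho>_def)
  obtain S where S: "\<And>j. j \<in> I \<Longrightarrow> finite (S j) \<and> card (S j) = p \<and>
     (\<forall>x\<in>S j. ball x (s * diameter (B j)) \<subseteq> B j) \<and>
     (\<forall>x\<in>S j. \<forall>y\<in>S j. x \<noteq> y \<longrightarrow> ball x (s * diameter (B j)) \<inter> ball y (s * diameter (B j)) = {})"
    using packB unfolding ball_packing_def by metis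
  have small: "ball x \<rho> \<subseteq> ball x (s * diameter (B j))" if "j \<in> I" for j x
    using rd[OF that] s by (intro subset_ball) (simp add: \<rho>_def mult.assoc)
  have inner: "ball x \<rho> \<subseteq> interior (B j)" if "j \<in> I" "x \<in> S j" for j x
    using small[OF that(1), of x] S[OF that(1)] that(2) by (intro interior_maximal) auto
  have far: "ball x \<rho> \<inter> ball y \<rho> = {}" if "i \<in> I" "j \<in> I" "i \<noteq> j" "x \<in> S i" "y \<in> S j" for i j x y
    using inner[OF that(1,4)] inner[OF that(2,5)] dis[OF that(1-3)] by blast
  have Sdis: "S i \<inter> S j = {}" if "i \<in> I" "j \<in> I" "i \<noteq> j" for i j
    using far[OF that] \<open>\<rho> > 0\<close> centre_in_ball by blast
  show ?thesis unfolding ball_packing_def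
  proof (intro exI[of _ "\<Union>j\<in>I. S j"] conjI ballI impI)
    show "finite (\<Union>j\<in>I. S j)" using I S by simp
    show "card (\<Union>j\<in>I. S j) = card I * p"
      using I S Sdis by (subst card_UN_disjoint) auto
    fix x assume "x \<in> (\<Union>j\<in>I. S j)"
    then obtain i where i: "i \<in> I" "x \<in> S i" by blast
    show "ball x (s * r * diameter A) \<subseteq> A"
      using inner[OF i] interior_subset[of "B i"] sub[OF i(1)] by (auto simp: \<rho>_def)
    fix y assume "y \<in> (\<Union>j\<in>I. S j)" "x \<noteq> y"
    then obtain j where j: "j \<in> I" "y \<in> S j" by blast
    show "ball x (s * r * diameter A) \<inter> ball y (s * r * diameter A) = {}"
    proof (cases "i = j")
      case True
      then have "ball x (s * diameter (B i)) \<inter> ball y (s * diameter (B i)) = {}"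
        using S[OF i(1)] i j \<open>x \<noteq> y\<close> by blast
      then show ?thesis using small[OF i(1), of x] small[OF i(1), of y] by (auto simp: \<rho>_def)
    next
      case False
      then show ?thesis using far[OF i(1) j(1) False i(2) j(2)] by (simp add: \<rho>_def)
    qed
  qed
qed

(* Iterating the decomposition packs N^m disjoint balls of radius s r^m diam A into A;
   comparing volumes for large m forces N r^d <= 1. *)
lemma similar_pieces_volume_bound:
  fixes A :: "'a::euclidean_space set" and B :: "'i \<Rightarrow> 'a set"
  assumes I: "finite I" and A: "bounded A" "diameter A > 0"
    and inner: "ball y (s * diameter A) \<subseteq> A" and s: "s > 0" and r: "r > 0"
    and B: "\<And>j. j \<in> I \<Longrightarrow> B j \<subseteq> A \<and> geom_similar A (B j) \<and> r * diameter A \<le> diameter (B j)"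
    and dis: "\<And>i j. i \<in> I \<Longrightarrow> j \<in> I \<Longrightarrow> i \<noteq> j \<Longrightarrow> interior (B i) \<inter> interior (B j) = {}"
  shows "real (card I) * r ^ DIM('a) \<le> 1"
proof (rule ccontr)
  define N where "N = card I"
  assume "\<not> ?thesis"
  then have big: "1 < real N * r ^ DIM('a)" by (simp add: N_def)
  have packing: "ball_packing A (N ^ m) (s * r ^ m)" for m
  proof (induction m)
    case 0
    have "ball_packing A 1 s" using inner ball_packing_1_iff by blast
    then show ?case by simp
  next
    case (Suc m)
    have "ball_packing A (card I * N ^ m) (s * r ^ m * r)"
    proof (rule ball_packing_UN[OF I _ dis])
      show "B j \<subseteq> A" "r * diameter A \<le> diameter (B j)" if "j \<in> I" for j
        using B[OF that] by blast+
      show "ball_packing (B j) (N ^ m) (s * r ^ m)" if "j \<in> I" for j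
        using B[OF that] ball_packing_geom_similar[OF _ A(1) Suc.IH] by blast
    qed (use s r A(2) in auto)
    then show ?case by (simp add: N_def ac_simps)
  qed
  obtain x where x: "x \<in> A" using A(2) by fastforce
  have sub: "A \<subseteq> cball x (diameter A)" using subset_cball_diameter[OF A(1) x] by simp
  have "(real N * r ^ DIM('a)) ^ m \<le> 1 / s ^ DIM('a)" for m
  proof -
    have "real (N ^ m) * (s * r ^ m * diameter A) ^ DIM('a) \<le> diameter A ^ DIM('a)"
      using ball_packing_card_le[OF packing[of m] _ A(2) sub] r s A(2) by simp
    then have "(real N * r ^ DIM('a)) ^ m * s ^ DIM('a) * diameter A ^ DIM('a) \<le> 1 * diameter A ^ DIM('a)"
      by (simp add: power_mult_distrib power_mult[symmetric] mult.commute mult.left_commute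
          mult.assoc power_commutes)
    then show ?thesis using s A(2) by (simp add: mult_le_cancel_right pos_le_divide_eq)
  qed
  moreover obtain m where "1 / s ^ DIM('a) < (real N * r ^ DIM('a)) ^ m"
    using real_arch_pow[OF big] by blast
  ultimately show False by (meson not_le)
qed

section \<open>Covering numbers\<close>

lemma covering_number_le:
  assumes "finite C" "X \<subseteq> (\<Union>x\<in>C. cball x r)"
  shows "covering_number r X \<le> card C"
  unfolding covering_number_def using assms by (intro Least_le) blast

lemma covering_number_attained:
  fixes X :: "'a::heine_borel set"
  assumes "bounded X" "r > 0"
  obtains C where "finite C" "card C = covering_number r X" "X \<subseteq> (\<Union>x\<in>C. cball x r)"
proof -
  define P where "P m \<longleftrightarrow> (\<exists>C. finite C \<and> card C = m \<and> X \<subseteq> (\<Union>x\<in>C. cball x r))" for m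
  have cpt: "compact (closure X)" using assms(1) by (simp add: compact_closure)
  have cover: "closure X \<subseteq> (\<Union>x\<in>closure X. ball x r)" using assms(2) by auto
  obtain D where D: "D \<subseteq> closure X" "finite D" "closure X \<subseteq> (\<Union>x\<in>D. ball x r)"
    by (rule compactE_image[OF cpt _ cover]) auto
  have "X \<subseteq> (\<Union>x\<in>D. cball x r)" using D(3) closure_subset[of X] ball_subset_cball by blast
  then have "P (card D)" unfolding P_def using D(2) by blast
  then have "P (LEAST m. P m)" by (rule LeastI)
  then show thesis using that unfolding P_def covering_number_def by blast
qed

lemma covering_number_le_card_meeting:
  assumes W: "finite W" and X: "X \<subseteq> (\<Union>\<tau>\<in>W. F \<tau>)"
    and F: "\<And>\<tau>. \<tau> \<in> W \<Longrightarrow> bounded (F \<tau>) \<and> diameter (F \<tau>) \<le> r"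
  shows "covering_number r X \<le> card {\<tau>\<in>W. F \<tau> \<inter> X \<noteq> {}}"
proof -
  define T where "T = {\<tau>\<in>W. F \<tau> \<inter> X \<noteq> {}}"
  have "\<forall>\<tau>\<in>T. \<exists>y. y \<in> F \<tau>" unfolding T_def by blast
  then obtain y where y: "\<forall>\<tau>\<in>T. y \<tau> \<in> F \<tau>" by (rule bchoice[THEN exE])
  have "X \<subseteq> (\<Union>z\<in>y ` T. cball z r)"
  proof
    fix x assume "x \<in> X"
    then obtain \<tau> where \<tau>: "\<tau> \<in> W" "x \<in> F \<tau>" using X by blast
    then have "\<tau> \<in> T" using \<open>x \<in> X\<close> by (auto simp: T_def)
    then have "F \<tau> \<subseteq> cball (y \<tau>) r" using subset_cball_diameter F[OF \<tau>(1)] y by blast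
    then show "x \<in> (\<Union>z\<in>y ` T. cball z r)" using \<open>\<tau> \<in> T\<close> \<tau>(2) by blast
  qed
  then have "covering_number r X \<le> card (y ` T)"
    using W by (intro covering_number_le) (auto simp: T_def)
  also have "\<dots> \<le> card T" using W by (intro card_image_le) (simp add: T_def)
  finally show ?thesis unfolding T_def .
qed

lemma card_meeting_le_covering_number:
  fixes X :: "'a::heine_borel set" and F :: "'i \<Rightarrow> 'a set"
  assumes X: "bounded X" and r: "r > 0" and W: "finite W" and T: "T \<subseteq> W" "\<And>\<tau>. \<tau> \<in> T \<Longrightarrow> F \<tau> \<inter> X \<noteq> {}"
    and M: "\<And>z. real (card {\<tau>\<in>W. F \<tau> \<inter> cball z r \<noteq> {}}) \<le> M"
  shows "real (card T) \<le> real (covering_number r X) * M"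
proof -
  obtain C where C: "finite C" "card C = covering_number r X" "X \<subseteq> (\<Union>z\<in>C. cball z r)"
    using covering_number_attained[OF X r] by blast
  have "T \<subseteq> (\<Union>z\<in>C. {\<tau>\<in>W. F \<tau> \<inter> cball z r \<noteq> {}})"
  proof
    fix \<tau> assume \<tau>: "\<tau> \<in> T"
    then obtain x where x: "x \<in> F \<tau>" "x \<in> X" using T(2) by blast
    then obtain z where z: "z \<in> C" "x \<in> cball z r" using C(3) by blast
    then have "F \<tau> \<inter> cball z r \<noteq> {}" using x(1) by blast
    then show "\<tau> \<in> (\<Union>z\<in>C. {\<tau>\<in>W. F \<tau> \<inter> cball z r \<noteq> {}})" using \<tau> T(1) z(1) by blast
  qed
  moreover have "finite (\<Union>z\<in>C. {\<tau>\<in>W. F \<tau> \<inter> cball z r \<noteq> {}})"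
    by (rule finite_subset[OF _ W]) blast
  ultimately have "card T \<le> card (\<Union>z\<in>C. {\<tau>\<in>W. F \<tau> \<inter> cball z r \<noteq> {}})"
    by (simp add: card_mono)
  also have "\<dots> \<le> (\<Sum>z\<in>C. card {\<tau>\<in>W. F \<tau> \<inter> cball z r \<noteq> {}})" by (rule card_UN_le[OF C(1)])
  finally have "real (card T) \<le> real (\<Sum>z\<in>C. card {\<tau>\<in>W. F \<tau> \<inter> cball z r \<noteq> {}})"
    by (simp only: of_nat_le_iff)
  also have "\<dots> = (\<Sum>z\<in>C. real (card {\<tau>\<in>W. F \<tau> \<inter> cball z r \<noteq> {}}))" by (rule of_nat_sum)
  also have "\<dots> \<le> real (card C) * M" by (rule sum_bounded_above) (rule M)
  finally show ?thesis using C(2) by simp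
qed

lemma card_meeting_cball_le:
  fixes F :: "'i \<Rightarrow> 'a::euclidean_space set"
  assumes W: "finite W" and \<rho>: "\<rho> > 0" and t: "0 \<le> t" and D: "0 \<le> D"
    and inner: "\<And>\<tau>. \<tau> \<in> W \<Longrightarrow> \<exists>y. ball y \<rho> \<subseteq> F \<tau>"
    and F: "\<And>\<tau>. \<tau> \<in> W \<Longrightarrow> bounded (F \<tau>) \<and> diameter (F \<tau>) \<le> D"
    and dis: "\<And>\<tau> \<tau>'. \<tau> \<in> W \<Longrightarrow> \<tau>' \<in> W \<Longrightarrow> \<tau> \<noteq> \<tau>' \<Longrightarrow> interior (F \<tau>) \<inter> interior (F \<tau>') = {}"
  shows "real (card {\<tau>\<in>W. F \<tau> \<inter> cball x t \<noteq> {}}) * \<rho> ^ DIM('a) \<le> (t + D) ^ DIM('a)"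
proof -
  define T where "T = {\<tau>\<in>W. F \<tau> \<inter> cball x t \<noteq> {}}"
  obtain y where y: "\<And>\<tau>. \<tau> \<in> W \<Longrightarrow> ball (y \<tau>) \<rho> \<subseteq> F \<tau>" using inner by metis
  show ?thesis unfolding T_def[symmetric]
  proof (rule card_disjoint_balls_le)
    show "finite T" using W by (simp add: T_def)
    show "0 \<le> t + D" using t D by simp
    show "ball (y \<tau>) \<rho> \<subseteq> cball x (t + D)" if \<tau>: "\<tau> \<in> T" for \<tau>
    proof
      fix z assume z: "z \<in> ball (y \<tau>) \<rho>"
      have "\<tau> \<in> W" "F \<tau> \<inter> cball x t \<noteq> {}" using \<tau> by (auto simp: T_def)
      then obtain w where w: "w \<in> F \<tau>" "dist x w \<le> t" by auto
      have "z \<in> F \<tau>" using y[OF \<open>\<tau> \<in> W\<close>] z by blast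
      then have "dist w z \<le> D"
        using diameter_bounded_bound[of "F \<tau>" w z] F[OF \<open>\<tau> \<in> W\<close>] w(1) by force
      then show "z \<in> cball x (t + D)" using w dist_triangle[of x z w] by simp
    qed
    show "ball (y \<tau>) \<rho> \<inter> ball (y \<tau>') \<rho> = {}" if "\<tau> \<in> T" "\<tau>' \<in> T" "\<tau> \<noteq> \<tau>'" for \<tau> \<tau>'
      using y[THEN interior_maximal] dis that by (fastforce simp: T_def)
  qed (rule \<rho>)
qed

section \<open>Words and products\<close>

lemma words_0: "words nk 0 = {[]}"
  by (auto simp: words_def)

lemma words_Suc:
  "\<sigma> \<in> words nk (Suc k) \<longleftrightarrow> (\<exists>\<tau> j. \<sigma> = \<tau> @ [j] \<and> \<tau> \<in> words nk k \<and> j \<in> {1..nk (Suc k)})"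
proof
  assume s: "\<sigma> \<in> words nk (Suc k)"
  then have "\<sigma> \<noteq> []" by (auto simp: words_def)
  then have e: "\<sigma> = butlast \<sigma> @ [last \<sigma>]" by simp
  have l: "length (butlast \<sigma>) = k" using s by (simp add: words_def)
  then have "butlast \<sigma> \<in> words nk k" using s by (auto simp: words_def nth_butlast)
  moreover have "last \<sigma> \<in> {1..nk (Suc k)}"
    using s \<open>\<sigma> \<noteq> []\<close> by (auto simp: words_def last_conv_nth)
  ultimately show "\<exists>\<tau> j. \<sigma> = \<tau> @ [j] \<and> \<tau> \<in> words nk k \<and> j \<in> {1..nk (Suc k)}" using e by blast
next
  assume "\<exists>\<tau> j. \<sigma> = \<tau> @ [j] \<and> \<tau> \<in> words nk k \<and> j \<in> {1..nk (Suc k)}"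
  then obtain \<tau> j where "\<sigma> = \<tau> @ [j]" "\<tau> \<in> words nk k" "j \<in> {1..nk (Suc k)}" by blast
  then show "\<sigma> \<in> words nk (Suc k)"
    by (auto simp: words_def nth_append less_Suc_eq)
qed

lemma words_Suc_eq: "words nk (Suc k) = (\<lambda>(\<tau>, j). \<tau> @ [j]) ` (words nk k \<times> {1..nk (Suc k)})"
  using words_Suc[of _ nk k] by (auto simp: image_iff)

lemma finite_words: "finite (words nk k)"
  by (induction k) (simp_all add: words_0 words_Suc_eq)

lemma length_words: "\<sigma> \<in> words nk k \<Longrightarrow> length \<sigma> = k"
  by (simp add: words_def)

lemma take_words: "\<sigma> \<in> words nk k \<Longrightarrow> m \<le> k \<Longrightarrow> take m \<sigma> \<in> words nk m"
  by (auto simp: words_def)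

lemma append_replicate_words:
  assumes "\<sigma> \<in> words nk k" and "\<And>i. 1 \<le> i \<Longrightarrow> 1 \<le> nk i"
  shows "\<sigma> @ replicate m 1 \<in> words nk (k + m)"
  using assms by (auto simp: words_def nth_append)

lemma words_nonempty: "(\<And>i. 1 \<le> i \<Longrightarrow> 1 \<le> nk i) \<Longrightarrow> words nk k \<noteq> {}"
  using append_replicate_words[of "[]" nk 0 k] by (auto simp: words_0)

lemma card_descendants:
  assumes "\<sigma> \<in> words nk k" "k \<le> l"
  shows "card {\<tau> \<in> words nk l. take k \<tau> = \<sigma>} = (\<Prod>i\<in>{k+1..l}. nk i)"
  using assms(2)
proof (induction l rule: dec_induct)
  case base
  have "{\<tau> \<in> words nk k. take k \<tau> = \<sigma>} = {\<sigma>}" using assms(1) by (auto simp: words_def)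
  then show ?case by simp
next
  case (step m)
  let ?X = "{\<tau> \<in> words nk m. take k \<tau> = \<sigma>}"
  have "{\<tau> \<in> words nk (Suc m). take k \<tau> = \<sigma>} = (\<lambda>(\<tau>, j). \<tau> @ [j]) ` (?X \<times> {1..nk (Suc m)})"
    using step.hyps(1) by (auto simp: words_Suc_eq length_words)
  moreover have "inj_on (\<lambda>(\<tau>, j). \<tau> @ [j]) (?X \<times> {1..nk (Suc m)})"
    by (auto simp: inj_on_def)
  moreover have "finite ?X" using finite_words[of nk m] by simp
  ultimately have "card {\<tau> \<in> words nk (Suc m). take k \<tau> = \<sigma>} = card ?X * nk (Suc m)"
    by (simp add: card_image card_cartesian_product)
  then show ?case using step.IH step.hyps(1) by (simp add: prod.nat_ivl_Suc')
qed

lemma prod_ge_1_nat: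
  fixes f :: "nat \<Rightarrow> nat"
  assumes "\<And>i. 1 \<le> i \<Longrightarrow> 1 \<le> f i"
  shows "1 \<le> (\<Prod>i\<in>{k+1..l}. f i)"
  by (rule prod_ge_1, rule assms) simp

lemma prod_le_prod_times_power:
  fixes f :: "nat \<Rightarrow> nat"
  assumes "k \<le> l" and "\<And>i. l < i \<Longrightarrow> real (f i) \<le> N" and "1 \<le> N"
  shows "real (\<Prod>i\<in>{k+1..l+j}. f i) \<le> real (\<Prod>i\<in>{k+1..l}. f i) * N ^ j"
proof -
  have "(\<Prod>i\<in>{l+1..l+j}. real (f i)) \<le> N ^ j" using assms(2,3) by (intro prod_le_power) auto
  moreover have "(\<Prod>i\<in>{k+1..l+j}. real (f i)) = (\<Prod>i\<in>{k+1..l}. real (f i)) * (\<Prod>i\<in>{l+1..l+j}. real (f i))"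
    using assms(1) by (intro prod.ub_add_nat) simp
  ultimately show ?thesis by (simp add: mult_left_mono prod_nonneg)
qed

lemma exp_neg_two_le_one_minus:
  fixes x :: real
  assumes "0 \<le> x" "x \<le> 1/2"
  shows "exp (-2 * x) \<le> 1 - x"
proof -
  have "0 \<le> x * (1 - 2 * x)" using assms by simp
  then have "1 \<le> (1 - x) * (1 + 2 * x)" by (simp add: algebra_simps)
  also have "\<dots> \<le> (1 - x) * exp (2 * x)" using assms exp_ge_add_one_self[of "2 * x"] by simp
  finally show ?thesis by (simp add: exp_minus field_simps)
qed

lemma eventually_one_minus_power_ge:
  fixes a :: "nat \<Rightarrow> real"
  assumes "a \<longlonglongrightarrow> 0"
  shows "eventually (\<lambda>k. 3/4 \<le> (1 - a k) ^ n) sequentially"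
proof -
  have "(\<lambda>k. \<bar>a k\<bar>) \<longlonglongrightarrow> 0" using assms by (rule tendsto_rabs_zero)
  then have "eventually (\<lambda>k. \<bar>a k\<bar> < 1 / (4 * real n + 4)) sequentially"
    by (rule order_tendstoD) simp
  then show ?thesis
  proof (rule eventually_mono)
    fix k assume "\<bar>a k\<bar> < 1 / (4 * real n + 4)"
    then have small: "4 * (real n * \<bar>a k\<bar>) + 4 * \<bar>a k\<bar> < 1"
      by (simp add: field_simps)
    have "real n * a k \<le> real n * \<bar>a k\<bar>" by (simp add: mult_left_mono)
    moreover have "a k \<le> 1"
      using small abs_ge_self[of "a k"] zero_le_mult_iff[of "real n" "\<bar>a k\<bar>"] by linarith
    then have "1 + real n * (- a k) \<le> (1 + (- a k)) ^ n" by (intro Bernoulli_inequality) simp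
    ultimately show "3/4 \<le> (1 - a k) ^ n" using small by simp
  qed
qed

section \<open>Lower spectrum\<close>

lemma ratio_powr:
  fixes R \<theta> s :: real
  assumes "R > 0"
  shows "(R / R powr (1/\<theta>)) powr s = R powr (s * (1 - 1/\<theta>))"
proof -
  have "R / R powr (1/\<theta>) = R powr (1 - 1/\<theta>)" using assms by (simp add: powr_diff)
  then show ?thesis by (simp add: powr_powr mult.commute)
qed

lemma le_ln_ratio_iff:
  fixes \<delta> L \<theta> s :: real
  assumes \<delta>: "0 < \<delta>" "\<delta> < 1" and L: "0 < L" and \<theta>: "0 < \<theta>" "\<theta> < 1"
  shows "s \<le> ln L / ((1 - 1/\<theta>) * ln \<delta>) \<longleftrightarrow> \<delta> powr (s * (1 - 1/\<theta>)) \<le> L"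
proof -
  have "1 - 1/\<theta> < 0" using \<theta> by (simp add: field_simps)
  moreover have "ln \<delta> < 0" using \<delta> by simp
  ultimately have D: "(1 - 1/\<theta>) * ln \<delta> > 0" by (simp add: mult_neg_neg)
  have "s \<le> ln L / ((1 - 1/\<theta>) * ln \<delta>) \<longleftrightarrow> s * ((1 - 1/\<theta>) * ln \<delta>) \<le> ln L"
    using D by (simp add: pos_le_divide_eq)
  also have "\<dots> \<longleftrightarrow> exp (s * ((1 - 1/\<theta>) * ln \<delta>)) \<le> L" using L by (rule ln_ge_iff)
  also have "exp (s * ((1 - 1/\<theta>) * ln \<delta>)) = \<delta> powr (s * (1 - 1/\<theta>))"
    using \<delta> by (simp add: powr_def mult.assoc)
  finally show ?thesis .
qed

lemma Sup_ereal_eq_liminf: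
  fixes S :: "real set" and g :: "nat \<Rightarrow> real"
  assumes zero: "0 \<in> S"
    and upper: "\<And>s \<epsilon>. s \<in> S \<Longrightarrow> \<epsilon> > 0 \<Longrightarrow> eventually (\<lambda>k. s - \<epsilon> \<le> g k) sequentially"
    and lower: "\<And>s. s > 0 \<Longrightarrow> eventually (\<lambda>k. s < g k) sequentially \<Longrightarrow> s \<in> S"
  shows "Sup (ereal ` S) = liminf (\<lambda>k. ereal (g k))"
proof (rule antisym)
  show "Sup (ereal ` S) \<le> liminf (\<lambda>k. ereal (g k))"
  proof (rule Sup_least, clarify)
    fix s assume "s \<in> S"
    show "ereal s \<le> liminf (\<lambda>k. ereal (g k))"
    proof (rule dense_le)
      fix y assume "y < ereal s"
      then obtain z where z: "y < ereal z" "ereal z < ereal s" using ereal_dense2 by blast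
      have "eventually (\<lambda>k. s - (s - z) \<le> g k) sequentially"
        using upper[OF \<open>s \<in> S\<close>, of "s - z"] z(2) by simp
      then have "eventually (\<lambda>k. ereal z \<le> ereal (g k)) sequentially"
        by (rule eventually_mono) simp
      then have "ereal z \<le> liminf (\<lambda>k. ereal (g k))" by (rule Liminf_bounded)
      then show "y \<le> liminf (\<lambda>k. ereal (g k))" using z(1) by simp
    qed
  qed
next
  show "liminf (\<lambda>k. ereal (g k)) \<le> Sup (ereal ` S)"
  proof (rule dense_le)
    fix y assume y: "y < liminf (\<lambda>k. ereal (g k))"
    show "y \<le> Sup (ereal ` S)"
    proof (cases "y \<le> 0")
      case True
      have "ereal 0 \<le> Sup (ereal ` S)" using zero by (intro Sup_upper) simp
      then show ?thesis using True by (simp add: zero_ereal_def)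
    next
      case False
      moreover have "y \<noteq> \<infinity>" using y by auto
      ultimately obtain s where s: "y = ereal s" "s > 0" by (cases y) auto
      have "eventually (\<lambda>k. y < ereal (g k)) sequentially" using y by (rule less_LiminfD)
      then have "eventually (\<lambda>k. s < g k) sequentially" by (rule eventually_mono) (simp add: s(1))
      then have "s \<in> S" using lower s(2) by blast
      then show ?thesis unfolding s(1) by (intro Sup_upper) simp
    qed
  qed
qed

definition lower_exponent :: "real \<Rightarrow> 'a::metric_space set \<Rightarrow> real \<Rightarrow> bool" where
  "lower_exponent \<theta> F s \<longleftrightarrow> s \<ge> 0 \<and>
     (\<exists>b>0. \<exists>C>0. \<forall>R. 0 < R \<and> R < b \<longrightarrow> (\<forall>x\<in>F.
        real (covering_number (R powr (1/\<theta>)) (cball x R \<inter> F)) \<ge> C * (R / R powr (1/\<theta>)) powr s))"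

lemma lower_spectrum_eq_Sup: "lower_spectrum \<theta> F = Sup (ereal ` {s. lower_exponent \<theta> F s})"
  by (simp add: lower_spectrum_def lower_exponent_def)

section \<open>Cantor-like constructions\<close>

lemma delta_0: "delta c 0 = 1"
  by (simp add: delta_def)

lemma delta_Suc: "delta c (Suc k) = delta c k * c (Suc k)"
  unfolding delta_def by (simp add: prod.nat_ivl_Suc' mult.commute)

lemma delta_split: "K \<le> k \<Longrightarrow> delta c k = delta c K * (\<Prod>i\<in>{K+1..k}. c i)"
proof (induction k rule: dec_induct)
  case base
  then show ?case by simp
next
  case (step m)
  then show ?case by (simp add: delta_Suc prod.nat_ivl_Suc' ac_simps)
qed

locale cantor_construction =
  fixes J :: "'a::euclidean_space set" and c a :: "nat \<Rightarrow> real" and nk :: "nat \<Rightarrow> nat"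
    and JS :: "nat list \<Rightarrow> 'a set" and E :: "'a set" and \<eta> :: real
  assumes a_pos: "\<And>k. 1 \<le> k \<Longrightarrow> 0 < a k" and a_summable: "summable a"
    and nk_ge_2: "\<And>k. 1 \<le> k \<Longrightarrow> 2 \<le> nk k"
    and c_pos: "\<And>k. 1 \<le> k \<Longrightarrow> 0 < c k" and c_less_1: "\<And>k. 1 \<le> k \<Longrightarrow> c k < 1"
    and eta_pos: "0 < \<eta>" and eta_le_c: "\<And>k. 1 \<le> k \<Longrightarrow> \<eta> \<le> c k"
    and J_compact: "compact J" and J_interior: "interior J \<noteq> {}"
    and JS_Nil: "JS [] = J"
    and child_subset: "\<And>k \<sigma> j. \<sigma> \<in> words nk k \<Longrightarrow> j \<in> {1..nk (Suc k)} \<Longrightarrow> JS (\<sigma> @ [j]) \<subseteq> JS \<sigma>"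
    and child_similar: "\<And>k \<sigma> j. \<sigma> \<in> words nk k \<Longrightarrow> j \<in> {1..nk (Suc k)} \<Longrightarrow>
        geom_similar (JS \<sigma>) (JS (\<sigma> @ [j]))"
    and child_ratio: "\<And>k \<sigma> j. \<sigma> \<in> words nk k \<Longrightarrow> j \<in> {1..nk (Suc k)} \<Longrightarrow>
        c (Suc k) * (1 - a (Suc k)) \<le> diameter (JS (\<sigma> @ [j])) / diameter (JS \<sigma>) \<and>
        diameter (JS (\<sigma> @ [j])) / diameter (JS \<sigma>) \<le> c (Suc k) * (1 + a (Suc k))"
    and child_interior_disjoint: "\<And>k \<sigma> j j'. \<sigma> \<in> words nk k \<Longrightarrow> j \<in> {1..nk (Suc k)} \<Longrightarrow>
        j' \<in> {1..nk (Suc k)} \<Longrightarrow> j \<noteq> j' \<Longrightarrow> interior (JS (\<sigma> @ [j])) \<inter> interior (JS (\<sigma> @ [j'])) = {}"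
    and E_eq: "E = (\<Inter>k\<in>{1..}. \<Union>\<sigma>\<in>words nk k. JS \<sigma>)"
begin

lemma nk_pos: "1 \<le> i \<Longrightarrow> 1 \<le> nk i"
  using nk_ge_2[of i] by simp

lemma J_contains_ball:
  obtains z e where "e > 0" "ball z e \<subseteq> J"
proof -
  obtain z where "z \<in> interior J" using J_interior by blast
  then obtain e where "e > 0" "ball z e \<subseteq> interior J" using open_interior open_contains_ball by blast
  then show thesis using that interior_subset by blast
qed

lemma diameter_J_pos: "diameter J > 0"
proof -
  obtain z e where ze: "e > 0" "ball z e \<subseteq> J" by (rule J_contains_ball)
  obtain b :: 'a where b: "b \<in> Basis" using nonempty_Basis by blast
  define y where "y = z + (e/2) *\<^sub>R b"
  have "dist z y = e/2" using b ze by (simp add: y_def dist_norm)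
  then have "y \<in> J" "z \<in> J" using ze by auto
  then have "dist z y \<le> diameter J"
    using diameter_bounded_bound[OF compact_imp_bounded[OF J_compact]] by blast
  then show ?thesis using \<open>dist z y = e/2\<close> ze by simp
qed

lemma cylinder_similar_J: "\<sigma> \<in> words nk k \<Longrightarrow> geom_similar J (JS \<sigma>)"
proof (induction k arbitrary: \<sigma>)
  case 0
  then show ?case by (simp add: words_0 JS_Nil geom_similar_refl)
next
  case (Suc k)
  then obtain \<tau> j where "\<sigma> = \<tau> @ [j]" "\<tau> \<in> words nk k" "j \<in> {1..nk (Suc k)}"
    using words_Suc by blast
  then show ?case using Suc.IH child_similar geom_similar_trans by blast
qed

lemma compact_cylinder: "\<sigma> \<in> words nk k \<Longrightarrow> compact (JS \<sigma>)"
  using geom_similar_compact[OF cylinder_similar_J J_compact] .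

lemma bounded_cylinder: "\<sigma> \<in> words nk k \<Longrightarrow> bounded (JS \<sigma>)"
  using compact_cylinder compact_imp_bounded by blast

lemma diameter_cylinder_pos: "\<sigma> \<in> words nk k \<Longrightarrow> diameter (JS \<sigma>) > 0"
proof -
  assume "\<sigma> \<in> words nk k"
  then obtain r where "r > 0" "diameter (JS \<sigma>) = r * diameter J"
    using geom_similar_diameter[OF cylinder_similar_J compact_imp_bounded[OF J_compact]] by blast
  then show ?thesis using diameter_J_pos by simp
qed

lemma cylinder_nonempty: "\<sigma> \<in> words nk k \<Longrightarrow> JS \<sigma> \<noteq> {}"
  using diameter_cylinder_pos by fastforce

lemma cylinders_contain_balls:
  "\<exists>s0>0. \<forall>k. \<forall>\<sigma>\<in>words nk k. \<exists>y. ball y (s0 * diameter (JS \<sigma>)) \<subseteq> JS \<sigma>"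
proof -
  obtain z e where ze: "e > 0" "ball z e \<subseteq> J" by (rule J_contains_ball)
  define s0 where "s0 = e / diameter J"
  have "s0 * diameter J = e" using diameter_J_pos by (simp add: s0_def)
  then have "ball_packing J 1 s0" unfolding ball_packing_1_iff using ze(2) by metis
  then have "\<exists>y. ball y (s0 * diameter (JS \<sigma>)) \<subseteq> JS \<sigma>" if "\<sigma> \<in> words nk k" for k \<sigma>
    using ball_packing_geom_similar[OF cylinder_similar_J[OF that] compact_imp_bounded[OF J_compact]]
      ball_packing_1_iff by blast
  moreover have "s0 > 0" using ze(1) diameter_J_pos by (simp add: s0_def)
  ultimately show ?thesis by blast
qed

lemma cylinder_subset_ancestor: "\<sigma> \<in> words nk l \<Longrightarrow> m \<le> l \<Longrightarrow> JS \<sigma> \<subseteq> JS (take m \<sigma>)"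
proof (induction l arbitrary: \<sigma>)
  case 0
  then show ?case by (simp add: words_0)
next
  case (Suc l)
  then obtain \<tau> j where t: "\<sigma> = \<tau> @ [j]" "\<tau> \<in> words nk l" "j \<in> {1..nk (Suc l)}"
    using words_Suc by blast
  have lt: "length \<tau> = l" using t(2) by (rule length_words)
  show ?case
  proof (cases "m = Suc l")
    case True
    then show ?thesis using t lt by simp
  next
    case False
    then have "m \<le> l" using Suc.prems by simp
    then have "take m \<sigma> = take m \<tau>" using t lt by simp
    then show ?thesis using Suc.IH[OF t(2) \<open>m \<le> l\<close>] child_subset[OF t(2,3)] t(1) by auto
  qed
qed

lemma child_diameter_bounds:
  assumes "\<sigma> \<in> words nk k" "j \<in> {1..nk (Suc k)}"
  shows "c (Suc k) * (1 - a (Suc k)) * diameter (JS \<sigma>) \<le> diameter (JS (\<sigma> @ [j]))"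
    and "diameter (JS (\<sigma> @ [j])) \<le> c (Suc k) * (1 + a (Suc k)) * diameter (JS \<sigma>)"
  using child_ratio[OF assms] diameter_cylinder_pos[OF assms(1)]
  by (simp_all add: pos_le_divide_eq pos_divide_le_eq)

lemma interior_disjoint_cylinders:
  "\<sigma> \<in> words nk k \<Longrightarrow> \<tau> \<in> words nk k \<Longrightarrow> \<sigma> \<noteq> \<tau> \<Longrightarrow> interior (JS \<sigma>) \<inter> interior (JS \<tau>) = {}"
proof (induction k arbitrary: \<sigma> \<tau>)
  case 0
  then show ?case by (simp add: words_0)
next
  case (Suc k)
  obtain \<sigma>' i where s: "\<sigma> = \<sigma>' @ [i]" "\<sigma>' \<in> words nk k" "i \<in> {1..nk (Suc k)}"
    using Suc.prems words_Suc by blast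
  obtain \<tau>' j where t: "\<tau> = \<tau>' @ [j]" "\<tau>' \<in> words nk k" "j \<in> {1..nk (Suc k)}"
    using Suc.prems words_Suc by blast
  show ?case
  proof (cases "\<sigma>' = \<tau>'")
    case True
    then have "i \<noteq> j" using s t Suc.prems by auto
    then show ?thesis using child_interior_disjoint[OF s(2,3) t(3)] s(1) t(1) True by simp
  next
    case False
    have "interior (JS \<sigma>) \<subseteq> interior (JS \<sigma>')" "interior (JS \<tau>) \<subseteq> interior (JS \<tau>')"
      using child_subset[OF s(2,3)] child_subset[OF t(2,3)] s(1) t(1) by (simp_all add: interior_mono)
    then show ?thesis using Suc.IH[OF s(2) t(2) False] by blast
  qed
qed

lemma E_subset_cylinders: "E \<subseteq> (\<Union>\<sigma>\<in>words nk k. JS \<sigma>)"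
proof (cases "k = 0")
  case True
  have "E \<subseteq> (\<Union>\<sigma>\<in>words nk 1. JS \<sigma>)" unfolding E_eq by auto
  also have "\<dots> \<subseteq> JS []" using cylinder_subset_ancestor[of _ 1 0] by auto
  finally show ?thesis using True by (simp add: words_0)
next
  case False
  then show ?thesis unfolding E_eq by auto
qed

(* The nested compact cylinders of the words sigma 1 1 ... 1 have a common point. *)
lemma cylinder_meets_E:
  assumes \<sigma>: "\<sigma> \<in> words nk k"
  shows "JS \<sigma> \<inter> E \<noteq> {}"
proof -
  define F where "F m = JS (\<sigma> @ replicate m 1)" for m
  have w: "\<sigma> @ replicate m 1 \<in> words nk (k + m)" for m
    using append_replicate_words[OF \<sigma> nk_pos] .
  have ls: "length \<sigma> = k" using \<sigma> by (rule length_words)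
  have "\<Inter>(range F) \<noteq> {}"
  proof (rule compact_nest)
    show "compact (F m)" "F m \<noteq> {}" for m
      using compact_cylinder[OF w] cylinder_nonempty[OF w] unfolding F_def by blast+
    fix m m' :: nat assume "m \<le> m'"
    then have "take (k + m) (\<sigma> @ replicate m' 1) = \<sigma> @ replicate m 1"
      using ls by (simp add: take_replicate)
    then show "F m' \<subseteq> F m"
      using cylinder_subset_ancestor[OF w[of m'], of "k + m"] \<open>m \<le> m'\<close> unfolding F_def by simp
  qed
  then obtain y where y: "\<And>m. y \<in> F m" by blast
  have "\<exists>\<sigma>'\<in>words nk k'. y \<in> JS \<sigma>'" for k'
  proof (cases "k \<le> k'")
    case True
    then show ?thesis using w[of "k' - k"] y[of "k' - k"] unfolding F_def by (intro bexI) auto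
  next
    case False
    have "y \<in> JS \<sigma>" using y[of 0] unfolding F_def by simp
    then have "y \<in> JS (take k' \<sigma>)" using cylinder_subset_ancestor[OF \<sigma>, of k'] False by auto
    then show ?thesis using take_words[OF \<sigma>, of k'] False by auto
  qed
  then have "y \<in> E" unfolding E_eq by blast
  moreover have "y \<in> JS \<sigma>" using y[of 0] unfolding F_def by simp
  ultimately show ?thesis by blast
qed

lemma nk_contraction_le_1:
  assumes k: "1 \<le> k" "a k < 1"
  shows "real (nk k) * (c k * (1 - a k)) ^ DIM('a) \<le> 1"
proof -
  obtain k' where k': "k = Suc k'" using k(1) by (cases k) auto
  obtain \<sigma> where \<sigma>: "\<sigma> \<in> words nk k'" using words_nonempty[of nk k', OF nk_pos] by blast
  obtain s0 where s0: "s0 > 0" "\<forall>k. \<forall>\<sigma>\<in>words nk k. \<exists>y. ball y (s0 * diameter (JS \<sigma>)) \<subseteq> JS \<sigma>"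
    using cylinders_contain_balls by blast
  obtain y where y: "ball y (s0 * diameter (JS \<sigma>)) \<subseteq> JS \<sigma>" using s0(2) \<sigma> by blast
  have "real (card {1..nk k}) * (c k * (1 - a k)) ^ DIM('a) \<le> 1"
  proof (rule similar_pieces_volume_bound[where B = "\<lambda>j. JS (\<sigma> @ [j])",
        OF _ bounded_cylinder[OF \<sigma>] diameter_cylinder_pos[OF \<sigma>] y s0(1)])
    show "c k * (1 - a k) > 0" using c_pos k by simp
    show "JS (\<sigma> @ [j]) \<subseteq> JS \<sigma> \<and> geom_similar (JS \<sigma>) (JS (\<sigma> @ [j])) \<and>
        c k * (1 - a k) * diameter (JS \<sigma>) \<le> diameter (JS (\<sigma> @ [j]))" if "j \<in> {1..nk k}" for j
      using child_subset[OF \<sigma>] child_similar[OF \<sigma>] child_diameter_bounds(1)[OF \<sigma>] that k' by simp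
    show "interior (JS (\<sigma> @ [i])) \<inter> interior (JS (\<sigma> @ [j])) = {}"
      if "i \<in> {1..nk k}" "j \<in> {1..nk k}" "i \<noteq> j" for i j
      using child_interior_disjoint[OF \<sigma>] that k' by simp
  qed simp
  then show ?thesis by simp
qed

lemma eventually_a_small:
  "eventually (\<lambda>k. 1 \<le> k \<and> 0 < a k \<and> a k \<le> 1/2 \<and> 3/4 \<le> (1 - a k) ^ DIM('a)) sequentially"
proof -
  have a0: "a \<longlonglongrightarrow> 0" using a_summable by (rule summable_LIMSEQ_zero)
  have "eventually (\<lambda>k. a k < 1/2) sequentially" using a0 by (rule order_tendstoD) simp
  moreover have "eventually (\<lambda>k. 3/4 \<le> (1 - a k) ^ DIM('a)) sequentially"
    using a0 by (rule eventually_one_minus_power_ge)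
  moreover have "eventually (\<lambda>k. 1 \<le> k) sequentially" by simp
  ultimately show ?thesis by eventually_elim (use a_pos in auto)
qed

lemma eventually_contraction_le: "eventually (\<lambda>k. c k ^ DIM('a) \<le> 2/3) sequentially"
  using eventually_a_small
proof (rule eventually_mono)
  fix k assume k: "1 \<le> k \<and> 0 < a k \<and> a k \<le> 1/2 \<and> 3/4 \<le> (1 - a k) ^ DIM('a)"
  have ck: "0 < c k" using c_pos k by simp
  have "real (nk k) * (c k ^ DIM('a) * (1 - a k) ^ DIM('a)) \<le> 1"
    using nk_contraction_le_1[of k] k by (simp add: power_mult_distrib)
  moreover have "2 * (c k ^ DIM('a) * (1 - a k) ^ DIM('a))
      \<le> real (nk k) * (c k ^ DIM('a) * (1 - a k) ^ DIM('a))"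
    using nk_ge_2[of k] k ck by (intro mult_right_mono) auto
  moreover have "c k ^ DIM('a) * (3/4) \<le> c k ^ DIM('a) * (1 - a k) ^ DIM('a)"
    using k ck by (intro mult_left_mono) auto
  ultimately show "c k ^ DIM('a) \<le> 2/3" by linarith
qed

lemma eventually_nk_le: "eventually (\<lambda>k. real (nk k) \<le> 4 / (3 * \<eta> ^ DIM('a))) sequentially"
  using eventually_a_small
proof (rule eventually_mono)
  fix k assume k: "1 \<le> k \<and> 0 < a k \<and> a k \<le> 1/2 \<and> 3/4 \<le> (1 - a k) ^ DIM('a)"
  have "\<eta> ^ DIM('a) * (3/4) \<le> c k ^ DIM('a) * (1 - a k) ^ DIM('a)"
    using k eta_pos eta_le_c[of k] by (intro mult_mono power_mono) auto
  moreover have "real (nk k) * (c k ^ DIM('a) * (1 - a k) ^ DIM('a)) \<le> 1"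
    using nk_contraction_le_1[of k] k by (simp add: power_mult_distrib)
  ultimately have "real (nk k) * (\<eta> ^ DIM('a) * (3/4)) \<le> 1"
    by (meson mult_left_mono of_nat_0_le_iff order_trans)
  then show "real (nk k) \<le> 4 / (3 * \<eta> ^ DIM('a))" using eta_pos by (simp add: field_simps)
qed

lemma delta_pos: "0 < delta c k"
  by (induction k) (simp_all add: delta_0 delta_Suc c_pos)

lemma delta_Suc_le: "delta c (Suc k) \<le> delta c k"
  using delta_pos[of k] c_less_1[of "Suc k"] by (simp add: delta_Suc mult_left_le)

lemma delta_antimono: "m \<le> k \<Longrightarrow> delta c k \<le> delta c m"
  by (induction k rule: dec_induct) (use delta_Suc_le order_trans in blast)+

lemma delta_le_1: "delta c k \<le> 1"
  using delta_antimono[of 0 k] by (simp add: delta_0)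

lemma delta_less_1: "1 \<le> k \<Longrightarrow> delta c k < 1"
proof -
  assume "1 \<le> k"
  then have "delta c k \<le> delta c 1" by (rule delta_antimono)
  also have "delta c 1 < 1" using c_less_1[of 1] by (simp add: delta_def)
  finally show ?thesis .
qed

lemma delta_Suc_ge: "\<eta> * delta c k \<le> delta c (Suc k)"
  using delta_pos[of k] eta_le_c[of "Suc k"] by (simp add: delta_Suc mult.commute mult_right_mono)

lemma delta_decay:
  assumes "\<And>k. K < k \<Longrightarrow> c k ^ DIM('a) \<le> 2/3"
  shows "delta c (K + j) ^ DIM('a) \<le> (2/3) ^ j * delta c K ^ DIM('a)"
proof (induction j)
  case 0
  then show ?case by simp
next
  case (Suc j)
  have "delta c (K + Suc j) ^ DIM('a) = delta c (K + j) ^ DIM('a) * c (Suc (K + j)) ^ DIM('a)"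
    by (simp add: delta_Suc power_mult_distrib)
  also have "\<dots> \<le> ((2/3) ^ j * delta c K ^ DIM('a)) * (2/3)"
    using Suc.IH assms[of "Suc (K + j)"] c_pos[of "Suc (K + j)"]
    by (intro mult_mono) (auto simp: delta_pos less_imp_le)
  finally show ?case by (simp add: ac_simps)
qed

lemma eventually_delta_contracts:
  assumes "q > 0"
  shows "\<exists>j. eventually (\<lambda>l. delta c (l + j) \<le> q * delta c l) sequentially"
proof -
  obtain K where K: "\<And>k. K \<le> k \<Longrightarrow> c k ^ DIM('a) \<le> 2/3"
    using eventually_contraction_le unfolding eventually_sequentially by blast
  obtain j where j: "(2/3::real) ^ j < q ^ DIM('a)"
    using real_arch_pow_inv[of "q ^ DIM('a)" "2/3"] assms by auto
  have "delta c (l + j) \<le> q * delta c l" if "K \<le> l" for l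
  proof -
    have "delta c (l + j) ^ DIM('a) \<le> (2/3) ^ j * delta c l ^ DIM('a)"
      using K that by (intro delta_decay) auto
    also have "\<dots> \<le> q ^ DIM('a) * delta c l ^ DIM('a)"
      using j delta_pos[of l] by (intro mult_right_mono) auto
    finally have "delta c (l + j) ^ DIM('a) \<le> (q * delta c l) ^ DIM('a)"
      by (simp add: power_mult_distrib)
    then show ?thesis
      using power_mono_iff[of "delta c (l + j)" "q * delta c l" "DIM('a)"] delta_pos[of "l + j"]
        delta_pos[of l] assms by simp
  qed
  then show ?thesis unfolding eventually_sequentially by blast
qed

lemma delta_tendsto_0: "delta c \<longlonglongrightarrow> 0"
proof (rule order_tendstoI)
  fix e :: real assume "e < 0"
  then have "e < delta c k" for k using delta_pos[of k] by linarith
  then show "eventually (\<lambda>k. e < delta c k) sequentially" by simp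
next
  fix \<epsilon> :: real assume \<epsilon>: "0 < \<epsilon>"
  obtain j where "eventually (\<lambda>l. delta c (l + j) \<le> \<epsilon> / 2 * delta c l) sequentially"
    using eventually_delta_contracts[of "\<epsilon> / 2"] \<epsilon> by auto
  then obtain K where jK: "\<And>l. K \<le> l \<Longrightarrow> delta c (l + j) \<le> \<epsilon> / 2 * delta c l"
    unfolding eventually_sequentially by blast
  have "delta c (K + j) \<le> \<epsilon> / 2 * delta c K" by (rule jK) simp
  also have "\<dots> \<le> \<epsilon> / 2" using delta_le_1[of K] \<epsilon> by (simp add: mult_left_le)
  also have "\<dots> < \<epsilon>" using \<epsilon> by simp
  finally have "delta c (K + j) < \<epsilon>" .
  then have "delta c k < \<epsilon>" if "K + j \<le> k" for k using delta_antimono[OF that] by simp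
  then show "eventually (\<lambda>k. delta c k < \<epsilon>) sequentially" unfolding eventually_sequentially by blast
qed

lemma l_index_bounds:
  assumes \<theta>: "0 < \<theta>" "\<theta> \<le> 1" and k: "1 \<le> k"
  shows "k \<le> l_index c \<theta> k" "delta c k powr (1/\<theta>) \<le> delta c (l_index c \<theta> k)"
    "delta c (Suc (l_index c \<theta> k)) < delta c k powr (1/\<theta>)"
proof -
  define P where "P l \<longleftrightarrow> 1 \<le> l \<and> delta c k powr (1/\<theta>) \<le> delta c l" for l
  have L: "l_index c \<theta> k = Greatest P" unfolding l_index_def P_def by simp
  have "delta c k powr (1/\<theta>) \<le> delta c k powr 1"
    using \<theta> delta_pos[of k] delta_le_1[of k] by (intro powr_mono') auto
  then have Pk: "P k" using k delta_pos[of k] by (simp add: P_def)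
  obtain k0 where k0: "delta c k0 < delta c k powr (1/\<theta>)"
    using order_tendstoD(2)[OF delta_tendsto_0, of "delta c k powr (1/\<theta>)"] delta_pos[of k]
    unfolding eventually_sequentially by auto
  have bound: "l \<le> k0" if "P l" for l
  proof (rule ccontr)
    assume "\<not> l \<le> k0"
    then have "delta c l \<le> delta c k0" by (intro delta_antimono) simp
    then show False using that k0 by (simp add: P_def)
  qed
  show "k \<le> l_index c \<theta> k" unfolding L by (rule Greatest_le_nat[of P k k0, OF Pk bound])
  show "delta c k powr (1/\<theta>) \<le> delta c (l_index c \<theta> k)"
    using GreatestI_nat[of P k k0, OF Pk bound] unfolding L P_def by simp
  show "delta c (Suc (l_index c \<theta> k)) < delta c k powr (1/\<theta>)"
  proof (rule ccontr)
    assume "\<not> ?thesis"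
    then have "P (Suc (Greatest P))" unfolding P_def L by simp
    then have "Suc (Greatest P) \<le> Greatest P" by (rule Greatest_le_nat[of P _ k0, OF _ bound])
    then show False by simp
  qed
qed

abbreviation descendants_count :: "real \<Rightarrow> nat \<Rightarrow> nat" where
  "descendants_count \<theta> k \<equiv> \<Prod>i\<in>{k+1..l_index c \<theta> k}. nk i"

lemma level_for_radius:
  assumes P: "P > 0" and R: "0 < R" "R < P * delta c K"
  obtains k where "K < k" "P * delta c k \<le> R" "\<eta> * R \<le> P * delta c k"
proof -
  obtain k' where "delta c k' < R / P"
    using order_tendstoD(2)[OF delta_tendsto_0, of "R / P"] P R unfolding eventually_sequentially by auto
  then have "P * delta c k' \<le> R" using P by (simp add: field_simps)
  then have ex: "\<exists>k. P * delta c k \<le> R" ..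
  define k where "k = (LEAST k. P * delta c k \<le> R)"
  have kR: "P * delta c k \<le> R" unfolding k_def by (rule LeastI_ex[OF ex])
  have "K < k"
  proof (rule ccontr)
    assume "\<not> K < k"
    then have "P * delta c K \<le> P * delta c k" using P by (intro mult_left_mono delta_antimono) auto
    then show False using kR R by simp
  qed
  have "\<not> P * delta c (k - 1) \<le> R" unfolding k_def by (rule not_less_Least) (use \<open>K < k\<close> k_def in simp)
  then have "\<eta> * R \<le> \<eta> * (P * delta c (k - 1))" using eta_pos by simp
  also have "\<dots> = P * (\<eta> * delta c (k - 1))" by (simp add: ac_simps)
  also have "\<dots> \<le> P * delta c k" using P delta_Suc_ge[of "k - 1"] \<open>K < k\<close> by (simp add: Suc_pred)
  finally show thesis using that \<open>K < k\<close> kR by blast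
qed


lemma summable_abs_a: "summable (\<lambda>i. \<bar>a i\<bar>)"
proof -
  have "eventually (\<lambda>i. a i = \<bar>a i\<bar>) sequentially"
    using eventually_ge_at_top[of 1] by (rule eventually_mono) (use a_pos in force)
  from summable_cong[OF this] a_summable show ?thesis by simp
qed

lemma sum_a_le: "finite I \<Longrightarrow> sum a I \<le> (\<Sum>i. \<bar>a i\<bar>)"
proof -
  assume "finite I"
  have "sum a I \<le> (\<Sum>i\<in>I. \<bar>a i\<bar>)" by (intro sum_mono) simp
  also have "\<dots> \<le> (\<Sum>i. \<bar>a i\<bar>)" using summable_abs_a \<open>finite I\<close> by (intro sum_le_suminf) auto
  finally show ?thesis .
qed

lemma diameter_cylinder_le_exp:
  "\<sigma> \<in> words nk k \<Longrightarrow> diameter (JS \<sigma>) \<le> diameter J * delta c k * exp (\<Sum>i\<in>{1..k}. a i)"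
proof (induction k arbitrary: \<sigma>)
  case 0
  then show ?case by (simp add: words_0 JS_Nil delta_0)
next
  case (Suc k)
  obtain \<tau> j where t: "\<sigma> = \<tau> @ [j]" "\<tau> \<in> words nk k" "j \<in> {1..nk (Suc k)}"
    using Suc.prems words_Suc by blast
  have "diameter (JS \<sigma>) \<le> c (Suc k) * (1 + a (Suc k)) * diameter (JS \<tau>)"
    using child_diameter_bounds(2)[OF t(2,3)] t(1) by simp
  also have "\<dots> \<le> c (Suc k) * exp (a (Suc k)) * (diameter J * delta c k * exp (\<Sum>i\<in>{1..k}. a i))"
    using Suc.IH[OF t(2)] c_pos[of "Suc k"] diameter_cylinder_pos[OF t(2)] exp_ge_add_one_self[of "a (Suc k)"]
    by (intro mult_mono mult_left_mono) (auto simp: add.commute)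
  also have "\<dots> = diameter J * delta c (Suc k) * exp (\<Sum>i\<in>{1..Suc k}. a i)"
    by (simp add: delta_Suc exp_add sum.atLeast1_atMost_eq prod.nat_ivl_Suc' ac_simps)
  finally show ?case .
qed

lemma diameter_cylinder_upper: "\<exists>P>0. \<forall>k. \<forall>\<sigma>\<in>words nk k. diameter (JS \<sigma>) \<le> P * delta c k"
proof (intro exI[of _ "diameter J * exp (\<Sum>i. \<bar>a i\<bar>)"] conjI allI ballI)
  show "diameter J * exp (\<Sum>i. \<bar>a i\<bar>) > 0" using diameter_J_pos by simp
  fix k \<sigma> assume "\<sigma> \<in> words nk k"
  then have "diameter (JS \<sigma>) \<le> diameter J * delta c k * exp (\<Sum>i\<in>{1..k}. a i)"
    by (rule diameter_cylinder_le_exp)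
  also have "\<dots> \<le> diameter J * delta c k * exp (\<Sum>i. \<bar>a i\<bar>)"
    using sum_a_le[of "{1..k}"] diameter_J_pos delta_pos[of k] by (intro mult_left_mono) auto
  finally show "diameter (JS \<sigma>) \<le> diameter J * exp (\<Sum>i. \<bar>a i\<bar>) * delta c k"
    by (simp add: ac_simps)
qed

lemma diameter_descendant_ge:
  assumes a: "\<And>i. K < i \<Longrightarrow> a i \<le> 1/2" and \<sigma>: "\<sigma> \<in> words nk (K + j)"
  shows "(\<Prod>i\<in>{K+1..K+j}. c i) * exp (-2 * (\<Sum>i\<in>{K+1..K+j}. a i)) * diameter (JS (take K \<sigma>))
    \<le> diameter (JS \<sigma>)"
  using \<sigma>
proof (induction j arbitrary: \<sigma>)
  case 0
  then show ?case by (simp add: length_words)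
next
  case (Suc j)
  obtain \<tau> i where t: "\<sigma> = \<tau> @ [i]" "\<tau> \<in> words nk (K + j)" "i \<in> {1..nk (Suc (K + j))}"
    using Suc.prems words_Suc[of \<sigma> nk "K + j"] by auto
  let ?n = "Suc (K + j)"
  have take: "take K \<sigma> = take K \<tau>" using t(1) length_words[OF t(2)] by simp
  have "(\<Prod>i\<in>{K+1..K + Suc j}. c i) * exp (-2 * (\<Sum>i\<in>{K+1..K + Suc j}. a i)) * diameter (JS (take K \<sigma>))
      = c ?n * exp (-2 * a ?n) *
        ((\<Prod>i\<in>{K+1..K+j}. c i) * exp (-2 * (\<Sum>i\<in>{K+1..K+j}. a i)) * diameter (JS (take K \<tau>)))"
    by (simp add: take prod.nat_ivl_Suc' sum.nat_ivl_Suc' exp_add[symmetric] algebra_simps)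
  also have "\<dots> \<le> c ?n * (1 - a ?n) * diameter (JS \<tau>)"
  proof -
    have "0 \<le> (\<Prod>i\<in>{K+1..K+j}. c i)" using c_pos by (intro prod_nonneg) (simp add: less_imp_le)
    moreover have "0 \<le> diameter (JS (take K \<tau>))"
      using bounded_cylinder[OF take_words[OF t(2), of K]] by (simp add: diameter_ge_0)
    ultimately show ?thesis
      using Suc.IH[OF t(2)] exp_neg_two_le_one_minus[of "a ?n"] a[of ?n] a_pos[of ?n] c_pos[of ?n]
      by (intro mult_mono mult_left_mono) auto
  qed
  also have "\<dots> \<le> diameter (JS \<sigma>)" using child_diameter_bounds(1)[OF t(2,3)] t(1) by simp
  finally show ?case .
qed

lemma diameter_cylinder_lower:
  "\<exists>p>0. eventually (\<lambda>k. \<forall>\<sigma>\<in>words nk k. p * delta c k \<le> diameter (JS \<sigma>)) sequentially"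
proof -
  obtain K where K: "\<And>i. K \<le> i \<Longrightarrow> a i \<le> 1/2"
    using eventually_a_small unfolding eventually_sequentially by blast
  define m0 where "m0 = Min ((\<lambda>\<sigma>. diameter (JS \<sigma>)) ` words nk K)"
  have m0: "m0 > 0" unfolding m0_def
    using finite_words words_nonempty[of nk K, OF nk_pos] diameter_cylinder_pos by (subst Min_gr_iff) auto
  have m0_le: "m0 \<le> diameter (JS \<sigma>)" if "\<sigma> \<in> words nk K" for \<sigma>
    unfolding m0_def using finite_words that by (intro Min_le) auto
  define p where "p = m0 / delta c K * exp (-2 * (\<Sum>i. \<bar>a i\<bar>))"
  have "p * delta c k \<le> diameter (JS \<sigma>)" if k: "K \<le> k" and \<sigma>: "\<sigma> \<in> words nk k" for k \<sigma>
  proof -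
    obtain j where j: "k = K + j" using le_Suc_ex[OF k] by blast
    have "0 < (\<Prod>i\<in>{K+1..k}. c i)" using c_pos by (intro prod_pos) auto
    then have "p * delta c k = (\<Prod>i\<in>{K+1..k}. c i) * exp (-2 * (\<Sum>i. \<bar>a i\<bar>)) * m0"
      using delta_split[OF k] delta_pos[of K] by (simp add: p_def field_simps)
    also have "\<dots> \<le> (\<Prod>i\<in>{K+1..k}. c i) * exp (-2 * (\<Sum>i\<in>{K+1..k}. a i)) * diameter (JS (take K \<sigma>))"
      using sum_a_le[of "{K+1..k}"] m0_le[OF take_words[OF \<sigma> k]] m0 \<open>0 < (\<Prod>i\<in>{K+1..k}. c i)\<close>
      by (intro mult_mono mult_left_mono) auto
    also have "\<dots> \<le> diameter (JS \<sigma>)"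
      using diameter_descendant_ge[of K \<sigma> j] K \<sigma> j by simp
    finally show ?thesis .
  qed
  moreover have "p > 0" using m0 delta_pos[of K] by (simp add: p_def)
  ultimately show ?thesis unfolding eventually_sequentially by blast
qed


lemma cylinders_contain_uniform_balls:
  "\<exists>q>0. eventually (\<lambda>l. \<forall>\<sigma>\<in>words nk l. \<exists>y. ball y (q * delta c l) \<subseteq> JS \<sigma>) sequentially"
proof -
  obtain p where p: "p > 0"
    and lower: "eventually (\<lambda>l. \<forall>\<sigma>\<in>words nk l. p * delta c l \<le> diameter (JS \<sigma>)) sequentially"
    using diameter_cylinder_lower by blast
  obtain s0 where s0: "s0 > 0" "\<forall>k. \<forall>\<sigma>\<in>words nk k. \<exists>y. ball y (s0 * diameter (JS \<sigma>)) \<subseteq> JS \<sigma>"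
    using cylinders_contain_balls by blast
  have "eventually (\<lambda>l. \<forall>\<sigma>\<in>words nk l. \<exists>y. ball y (s0 * p * delta c l) \<subseteq> JS \<sigma>) sequentially"
    using lower
  proof (rule eventually_mono)
    fix l assume low: "\<forall>\<sigma>\<in>words nk l. p * delta c l \<le> diameter (JS \<sigma>)"
    show "\<forall>\<sigma>\<in>words nk l. \<exists>y. ball y (s0 * p * delta c l) \<subseteq> JS \<sigma>"
    proof
      fix \<sigma> assume \<sigma>: "\<sigma> \<in> words nk l"
      obtain y where y: "ball y (s0 * diameter (JS \<sigma>)) \<subseteq> JS \<sigma>" using s0(2) \<sigma> by blast
      have "s0 * p * delta c l \<le> s0 * diameter (JS \<sigma>)"
        using low \<sigma> s0(1) by (simp add: mult.assoc mult_left_mono)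
      then have "ball y (s0 * p * delta c l) \<subseteq> JS \<sigma>" by (rule subset_trans[OF subset_ball y])
      then show "\<exists>y. ball y (s0 * p * delta c l) \<subseteq> JS \<sigma>" ..
    qed
  qed
  moreover have "s0 * p > 0" using s0(1) p by simp
  ultimately show ?thesis by blast
qed

lemma bounded_overlap:
  assumes "0 \<le> \<Lambda>"
  shows "\<exists>M>0. eventually (\<lambda>l. \<forall>z. \<forall>t\<in>{0..\<Lambda> * delta c l}.
    real (card {\<tau>\<in>words nk l. JS \<tau> \<inter> cball z t \<noteq> {}}) \<le> M) sequentially"
    (is "\<exists>M>0. ?P M")
proof -
  obtain P where P: "P > 0" "\<forall>k. \<forall>\<sigma>\<in>words nk k. diameter (JS \<sigma>) \<le> P * delta c k"
    using diameter_cylinder_upper by blast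
  obtain q where q: "q > 0"
    and inner: "eventually (\<lambda>l. \<forall>\<sigma>\<in>words nk l. \<exists>y. ball y (q * delta c l) \<subseteq> JS \<sigma>) sequentially"
    using cylinders_contain_uniform_balls by blast
  define M where "M = ((\<Lambda> + P) / q) ^ DIM('a)"
  have "?P M"
    using inner
  proof (rule eventually_mono)
    fix l assume inner_l: "\<forall>\<sigma>\<in>words nk l. \<exists>y. ball y (q * delta c l) \<subseteq> JS \<sigma>"
    have \<rho>: "q * delta c l > 0" using q delta_pos[of l] by simp
    show "\<forall>z. \<forall>t\<in>{0..\<Lambda> * delta c l}. real (card {\<tau>\<in>words nk l. JS \<tau> \<inter> cball z t \<noteq> {}}) \<le> M"
    proof (intro allI ballI)
      fix z t assume t: "t \<in> {0..\<Lambda> * delta c l}"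
      have "real (card {\<tau>\<in>words nk l. JS \<tau> \<inter> cball z t \<noteq> {}}) * (q * delta c l) ^ DIM('a)
          \<le> (t + P * delta c l) ^ DIM('a)"
      proof (rule card_meeting_cball_le[OF finite_words \<rho>])
        show "0 \<le> t" using t by simp
        show "0 \<le> P * delta c l" using P(1) delta_pos[of l] by simp
        show "\<exists>y. ball y (q * delta c l) \<subseteq> JS \<tau>" if "\<tau> \<in> words nk l" for \<tau>
          using inner_l that by blast
        show "bounded (JS \<tau>) \<and> diameter (JS \<tau>) \<le> P * delta c l" if "\<tau> \<in> words nk l" for \<tau>
          using bounded_cylinder[OF that] P(2) that by simp
        show "interior (JS \<tau>) \<inter> interior (JS \<tau>') = {}"
          if "\<tau> \<in> words nk l" "\<tau>' \<in> words nk l" "\<tau> \<noteq> \<tau>'" for \<tau> \<tau>'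
          using interior_disjoint_cylinders[OF that] .
      qed
      also have "\<dots> \<le> ((\<Lambda> + P) * delta c l) ^ DIM('a)"
        using t P(1) delta_pos[of l] by (intro power_mono) (auto simp: algebra_simps)
      also have "\<dots> = M * (q * delta c l) ^ DIM('a)"
        using q by (simp add: M_def flip: power_mult_distrib)
      finally show "real (card {\<tau>\<in>words nk l. JS \<tau> \<inter> cball z t \<noteq> {}}) \<le> M"
        using \<rho> by simp
    qed
  qed
  moreover have "M > 0" using assms P(1) q by (simp add: M_def)
  ultimately show ?thesis by blast
qed

lemma card_descendants_le_covering_number:
  assumes \<sigma>: "\<sigma> \<in> words nk k" and kl: "k \<le> l" and X: "bounded X" "JS \<sigma> \<subseteq> X" and r: "0 < r"
    and overlap: "\<And>z. real (card {\<tau>\<in>words nk l. JS \<tau> \<inter> cball z r \<noteq> {}}) \<le> M"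
  shows "real (\<Prod>i\<in>{k+1..l}. nk i) \<le> real (covering_number r (X \<inter> E)) * M"
proof -
  have "real (card {\<tau> \<in> words nk l. take k \<tau> = \<sigma>}) \<le> real (covering_number r (X \<inter> E)) * M"
  proof (rule card_meeting_le_covering_number[OF _ r finite_words _ _ overlap])
    show "bounded (X \<inter> E)" using X(1) by (simp add: bounded_Int)
    show "JS \<tau> \<inter> (X \<inter> E) \<noteq> {}" if "\<tau> \<in> {\<tau> \<in> words nk l. take k \<tau> = \<sigma>}" for \<tau>
    proof -
      have \<tau>: "\<tau> \<in> words nk l" "take k \<tau> = \<sigma>" using that by auto
      then have "JS \<tau> \<subseteq> X" using cylinder_subset_ancestor[OF \<tau>(1) kl] X(2) by auto
      then show ?thesis using cylinder_meets_E[OF \<tau>(1)] by blast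
    qed
  qed blast
  then show ?thesis using card_descendants[OF \<sigma> kl] by simp
qed

(* Lower bound: the n_(k+1)...n_l level-l descendants (l = l(theta,k)) of the level-k cylinder
   at x all meet B(x,R) and E, while a ball of radius R^(1/theta) meets boundedly many of them. *)
lemma descendants_le_covering_number:
  assumes \<theta>: "0 < \<theta>" "\<theta> < 1" and \<Lambda>: "0 < \<Lambda>"
  shows "\<exists>M>0. eventually (\<lambda>k. \<forall>x\<in>E. \<forall>R. 0 < R \<and> R \<le> \<Lambda> * delta c k \<and>
      (\<forall>\<sigma>\<in>words nk k. diameter (JS \<sigma>) \<le> R) \<longrightarrow>
      real (descendants_count \<theta> k)
        \<le> real (covering_number (R powr (1/\<theta>)) (cball x R \<inter> E)) * M) sequentially"
    (is "\<exists>M>0. ?P M")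
proof -
  define A where "A = \<Lambda> powr (1/\<theta>)"
  obtain M where M: "M > 0" and overlap: "eventually (\<lambda>l. \<forall>z. \<forall>t\<in>{0..A * delta c l}.
      real (card {\<tau>\<in>words nk l. JS \<tau> \<inter> cball z t \<noteq> {}}) \<le> M) sequentially"
    using bounded_overlap[of A] by (auto simp: A_def)
  have "?P M"
    using eventually_all_ge_at_top[OF overlap] eventually_ge_at_top[of 1]
  proof eventually_elim
    case (elim k)
    show ?case
    proof (intro ballI allI impI)
      fix x R assume x: "x \<in> E"
        and R: "0 < R \<and> R \<le> \<Lambda> * delta c k \<and> (\<forall>\<sigma>\<in>words nk k. diameter (JS \<sigma>) \<le> R)"
      define l where "l = l_index c \<theta> k"
      define r where "r = R powr (1/\<theta>)"
      obtain \<sigma> where \<sigma>: "\<sigma> \<in> words nk k" "x \<in> JS \<sigma>" using E_subset_cylinders[of k] x by blast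
      have \<sigma>R: "JS \<sigma> \<subseteq> cball x R"
        using subset_cball_diameter[OF bounded_cylinder[OF \<sigma>(1)] \<sigma>(2)] R \<sigma>(1) by blast
      have kl: "k \<le> l" and dl: "delta c k powr (1/\<theta>) \<le> delta c l"
        using l_index_bounds[of \<theta> k] \<theta> elim by (auto simp: l_def)
      have r: "0 < r" using R by (simp add: r_def)
      have "r \<le> (\<Lambda> * delta c k) powr (1/\<theta>)" unfolding r_def using R \<theta> by (intro powr_mono2) auto
      also have "\<dots> = A * delta c k powr (1/\<theta>)"
        unfolding A_def using \<Lambda> delta_pos[of k] by (simp add: powr_mult)
      also have "\<dots> \<le> A * delta c l" using dl by (intro mult_left_mono) (auto simp: A_def)
      finally have "r \<in> {0..A * delta c l}" using r by simp
      then have "real (card {\<tau>\<in>words nk l. JS \<tau> \<inter> cball z r \<noteq> {}}) \<le> M" for z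
        using elim kl by blast
      then show "real (descendants_count \<theta> k)
          \<le> real (covering_number (R powr (1/\<theta>)) (cball x R \<inter> E)) * M"
        using card_descendants_le_covering_number[OF \<sigma>(1) kl _ \<sigma>R r] by (simp add: l_def r_def)
    qed
  qed
  then show ?thesis using M by blast
qed

lemma lower_exponent_of_growth:
  assumes \<theta>: "0 < \<theta>" "\<theta> < 1" and s: "0 \<le> s"
    and growth: "eventually (\<lambda>k. delta c k powr (s * (1 - 1/\<theta>))
      \<le> real (descendants_count \<theta> k)) sequentially"
  shows "lower_exponent \<theta> E s"
proof -
  define e where "e = s * (1 - 1/\<theta>)"
  have "1 - 1/\<theta> \<le> 0" using \<theta> by (simp add: field_simps)
  then have e: "e \<le> 0" using s by (simp add: e_def mult_nonneg_nonpos)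
  obtain P where P: "P > 0" "\<forall>k. \<forall>\<sigma>\<in>words nk k. diameter (JS \<sigma>) \<le> P * delta c k"
    using diameter_cylinder_upper by blast
  obtain M where M: "M > 0" and count: "eventually (\<lambda>k. \<forall>x\<in>E. \<forall>R. 0 < R \<and> R \<le> P / \<eta> * delta c k \<and>
      (\<forall>\<sigma>\<in>words nk k. diameter (JS \<sigma>) \<le> R) \<longrightarrow>
      real (descendants_count \<theta> k)
        \<le> real (covering_number (R powr (1/\<theta>)) (cball x R \<inter> E)) * M) sequentially"
    using descendants_le_covering_number[OF \<theta>, of "P / \<eta>"] P(1) eta_pos by auto
  obtain K where K: "\<And>k. K \<le> k \<Longrightarrow> (\<forall>x\<in>E. \<forall>R. 0 < R \<and> R \<le> P / \<eta> * delta c k \<and>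
      (\<forall>\<sigma>\<in>words nk k. diameter (JS \<sigma>) \<le> R) \<longrightarrow>
      real (descendants_count \<theta> k)
        \<le> real (covering_number (R powr (1/\<theta>)) (cball x R \<inter> E)) * M) \<and>
      delta c k powr e \<le> real (descendants_count \<theta> k)"
    using eventually_conj[OF count growth] unfolding eventually_sequentially e_def by blast
  define C where "C = 1 / (M * P powr e)"
  have bound: "C * (R / R powr (1/\<theta>)) powr s \<le> real (covering_number (R powr (1/\<theta>)) (cball x R \<inter> E))"
    if R: "0 < R" "R < P * delta c K" and x: "x \<in> E" for R x
  proof -
    obtain k where k: "K < k" "P * delta c k \<le> R" "\<eta> * R \<le> P * delta c k"
      using level_for_radius[OF P(1) R] .
    have "\<forall>\<sigma>\<in>words nk k. diameter (JS \<sigma>) \<le> R" using P(2) k(2) by (meson order_trans)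
    moreover have "R \<le> P / \<eta> * delta c k" using k(3) eta_pos by (simp add: field_simps)
    ultimately have L: "real (descendants_count \<theta> k)
        \<le> real (covering_number (R powr (1/\<theta>)) (cball x R \<inter> E)) * M"
      using K[of k] k(1) R(1) x by auto
    have "C * (R / R powr (1/\<theta>)) powr s = C * R powr e"
      using ratio_powr[OF R(1)] by (simp add: e_def)
    also have "\<dots> = (R / P) powr e / M" using R(1) P(1) by (simp add: C_def powr_divide)
    also have "\<dots> \<le> delta c k powr e / M"
      using k(2) P(1) M delta_pos[of k] e by (intro divide_right_mono powr_mono2') (auto simp: field_simps)
    also have "\<dots> \<le> real (descendants_count \<theta> k) / M"
      using K[of k] k(1) M by (intro divide_right_mono) auto
    also have "\<dots> \<le> real (covering_number (R powr (1/\<theta>)) (cball x R \<inter> E))"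
      using L M by (simp add: pos_divide_le_eq)
    finally show ?thesis .
  qed
  have "P * delta c K > 0" "C > 0" using P(1) M delta_pos[of K] by (auto simp: C_def)
  then show ?thesis unfolding lower_exponent_def using s bound by blast
qed


lemma covering_number_le_ancestors:
  assumes km: "k \<le> m" and diam: "\<And>\<tau>. \<tau> \<in> words nk m \<Longrightarrow> diameter (JS \<tau>) \<le> r"
  shows "covering_number r (X \<inter> E) \<le> card {\<sigma>\<in>words nk k. JS \<sigma> \<inter> X \<noteq> {}} * (\<Prod>i\<in>{k+1..m}. nk i)"
proof -
  define S where "S = {\<sigma>\<in>words nk k. JS \<sigma> \<inter> X \<noteq> {}}"
  have "covering_number r (X \<inter> E) \<le> card {\<tau>\<in>words nk m. JS \<tau> \<inter> (X \<inter> E) \<noteq> {}}"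
  proof (rule covering_number_le_card_meeting[OF finite_words])
    show "X \<inter> E \<subseteq> (\<Union>\<tau>\<in>words nk m. JS \<tau>)" using E_subset_cylinders[of m] by blast
    show "bounded (JS \<tau>) \<and> diameter (JS \<tau>) \<le> r" if "\<tau> \<in> words nk m" for \<tau>
      using bounded_cylinder[OF that] diam[OF that] by blast
  qed
  also have "\<dots> \<le> card (\<Union>\<sigma>\<in>S. {\<tau>\<in>words nk m. take k \<tau> = \<sigma>})"
  proof (rule card_mono)
    show "finite (\<Union>\<sigma>\<in>S. {\<tau>\<in>words nk m. take k \<tau> = \<sigma>})"
      by (rule finite_subset[OF _ finite_words]) blast
    show "{\<tau>\<in>words nk m. JS \<tau> \<inter> (X \<inter> E) \<noteq> {}} \<subseteq> (\<Union>\<sigma>\<in>S. {\<tau>\<in>words nk m. take k \<tau> = \<sigma>})"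
    proof
      fix \<tau> assume \<tau>: "\<tau> \<in> {\<tau>\<in>words nk m. JS \<tau> \<inter> (X \<inter> E) \<noteq> {}}"
      then have "JS \<tau> \<subseteq> JS (take k \<tau>)" using cylinder_subset_ancestor km by blast
      then have "take k \<tau> \<in> S" using \<tau> take_words[of \<tau> nk m k] km by (auto simp: S_def)
      then show "\<tau> \<in> (\<Union>\<sigma>\<in>S. {\<tau>\<in>words nk m. take k \<tau> = \<sigma>})" using \<tau> by blast
    qed
  qed
  also have "\<dots> \<le> (\<Sum>\<sigma>\<in>S. card {\<tau>\<in>words nk m. take k \<tau> = \<sigma>})"
    by (rule card_UN_le) (simp add: S_def finite_words)
  also have "\<dots> = card S * (\<Prod>i\<in>{k+1..m}. nk i)"
    using card_descendants[OF _ km] by (simp add: S_def)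
  finally show ?thesis unfolding S_def .
qed

(* Upper bound: B(x, delta_k) meets boundedly many level-k cylinders, and j levels after
   l(theta,k), for a fixed j, all cylinders are smaller than delta_k^(1/theta). *)
lemma covering_number_le_descendants:
  assumes \<theta>: "0 < \<theta>" "\<theta> < 1"
  shows "\<exists>M>0. eventually (\<lambda>k. \<forall>x. real (covering_number (delta c k powr (1/\<theta>)) (cball x (delta c k) \<inter> E))
    \<le> M * real (descendants_count \<theta> k)) sequentially"
    (is "\<exists>M>0. ?P M")
proof -
  obtain P where P: "P > 0" "\<forall>k. \<forall>\<sigma>\<in>words nk k. diameter (JS \<sigma>) \<le> P * delta c k"
    using diameter_cylinder_upper by blast
  obtain j where contract: "eventually (\<lambda>l. delta c (l + j) \<le> 1 / P * delta c l) sequentially"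
    using eventually_delta_contracts[of "1 / P"] P(1) by auto
  obtain M1 where M1: "M1 > 0" and overlap: "eventually (\<lambda>l. \<forall>z. \<forall>t\<in>{0..1 * delta c l}.
      real (card {\<tau>\<in>words nk l. JS \<tau> \<inter> cball z t \<noteq> {}}) \<le> M1) sequentially"
    using bounded_overlap[of 1] by auto
  define N where "N = max 1 (4 / (3 * \<eta> ^ DIM('a)))"
  have nk_le: "eventually (\<lambda>i. real (nk i) \<le> N) sequentially"
    using eventually_nk_le by (rule eventually_mono) (simp add: N_def)
  define M where "M = M1 * N ^ Suc j"
  have "?P M"
    using overlap eventually_all_ge_at_top[OF contract] eventually_all_ge_at_top[OF nk_le]
      eventually_ge_at_top[of 1]
  proof eventually_elim
    case (elim k)
    show ?case
    proof
      fix x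
      define l where "l = l_index c \<theta> k"
      define m where "m = l + Suc j"
      have kl: "k \<le> l" and dl: "delta c (Suc l) < delta c k powr (1/\<theta>)"
        using l_index_bounds[of \<theta> k] \<theta> elim by (auto simp: l_def)
      have "delta c (Suc l + j) \<le> 1 / P * delta c (Suc l)" using elim(2) kl le_SucI by blast
      then have "P * delta c m \<le> delta c (Suc l)" using P(1) by (simp add: m_def field_simps)
      then have diam: "diameter (JS \<tau>) \<le> delta c k powr (1/\<theta>)" if "\<tau> \<in> words nk m" for \<tau>
        using P(2) that dl by (meson less_imp_le order_trans)
      have "real (covering_number (delta c k powr (1/\<theta>)) (cball x (delta c k) \<inter> E))
          \<le> real (card {\<sigma>\<in>words nk k. JS \<sigma> \<inter> cball x (delta c k) \<noteq> {}}) * real (\<Prod>i\<in>{k+1..m}. nk i)"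
        using covering_number_le_ancestors[of k m "delta c k powr (1/\<theta>)"] kl diam
        by (simp add: m_def del: of_nat_prod flip: of_nat_mult)
      also have "\<dots> \<le> M1 * (real (\<Prod>i\<in>{k+1..l}. nk i) * N ^ Suc j)"
      proof (rule mult_mono)
        show "real (\<Prod>i\<in>{k+1..m}. nk i) \<le> real (\<Prod>i\<in>{k+1..l}. nk i) * N ^ Suc j"
          unfolding m_def using kl elim(3) by (intro prod_le_prod_times_power) (auto simp: N_def)
      qed (use elim delta_pos[of k] M1 in \<open>auto simp: prod_nonneg\<close>)
      finally show "real (covering_number (delta c k powr (1/\<theta>)) (cball x (delta c k) \<inter> E))
          \<le> M * real (descendants_count \<theta> k)"
        by (simp add: M_def l_def ac_simps)
    qed
  qed
  moreover have "M > 0" using M1 by (simp add: M_def N_def)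
  ultimately show ?thesis by blast
qed

lemma growth_of_lower_exponent:
  assumes \<theta>: "0 < \<theta>" "\<theta> < 1" and s: "lower_exponent \<theta> E s" and \<epsilon>: "0 < \<epsilon>"
  shows "eventually (\<lambda>k. delta c k powr ((s - \<epsilon>) * (1 - 1/\<theta>))
    \<le> real (descendants_count \<theta> k)) sequentially"
proof -
  obtain b C where b: "b > 0" and C: "C > 0" and low: "\<forall>R. 0 < R \<and> R < b \<longrightarrow> (\<forall>x\<in>E.
      real (covering_number (R powr (1/\<theta>)) (cball x R \<inter> E)) \<ge> C * (R / R powr (1/\<theta>)) powr s)"
    using s unfolding lower_exponent_def by blast
  obtain M where M: "M > 0" and up: "eventually (\<lambda>k. \<forall>x. real (covering_number (delta c k powr (1/\<theta>))
      (cball x (delta c k) \<inter> E)) \<le> M * real (descendants_count \<theta> k)) sequentially"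
    using covering_number_le_descendants[OF \<theta>] by blast
  obtain x0 where x0: "x0 \<in> E" using cylinder_meets_E[of "[]" 0] by (auto simp: words_0)
  define \<kappa> where "\<kappa> = \<epsilon> * (1/\<theta> - 1)"
  have \<kappa>: "\<kappa> > 0" using \<theta> \<epsilon> by (simp add: \<kappa>_def field_simps)
  have small: "eventually (\<lambda>k. delta c k < min b ((C / M) powr (1/\<kappa>))) sequentially"
    using order_tendstoD(2)[OF delta_tendsto_0, of "min b ((C / M) powr (1/\<kappa>))"] b C M by simp
  show ?thesis
    using up small
  proof eventually_elim
    case (elim k)
    define R where "R = delta c k"
    define L where "L = real (descendants_count \<theta> k)"
    have R: "0 < R" "R < b" using delta_pos[of k] elim by (auto simp: R_def)
    have "C * R powr (s * (1 - 1/\<theta>)) = C * (R / R powr (1/\<theta>)) powr s"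
      using ratio_powr[OF R(1)] by simp
    also have "\<dots> \<le> real (covering_number (R powr (1/\<theta>)) (cball x0 R \<inter> E))" using low R x0 by blast
    also have "\<dots> \<le> M * L" using elim by (simp add: R_def L_def)
    finally have "R powr (s * (1 - 1/\<theta>)) \<le> M * L / C" using C by (simp add: field_simps)
    (* the factor R^kappa, which tends to 0 with k, absorbs the constant M / C *)
    moreover have "R powr \<kappa> \<le> C / M"
    proof -
      have "R powr \<kappa> \<le> ((C / M) powr (1/\<kappa>)) powr \<kappa>"
        using elim \<kappa> R(1) by (intro powr_mono2) (auto simp: R_def)
      then show ?thesis using \<kappa> C M by (simp add: powr_powr)
    qed
    ultimately have "R powr (s * (1 - 1/\<theta>)) * R powr \<kappa> \<le> M * L / C * (C / M)"
      using M C by (intro mult_mono) (auto simp: L_def prod_nonneg)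
    moreover have "s * (1 - 1/\<theta>) + \<kappa> = (s - \<epsilon>) * (1 - 1/\<theta>)"
      using \<theta> by (simp add: \<kappa>_def field_simps)
    ultimately have "R powr ((s - \<epsilon>) * (1 - 1/\<theta>)) \<le> M * L / C * (C / M)"
      by (simp add: powr_add[symmetric])
    also have "\<dots> = L" using C M by simp
    finally show ?case by (simp add: R_def L_def)
  qed
qed

lemma lower_spectrum_eq:
  assumes \<theta>: "0 < \<theta>" "\<theta> < 1"
  shows "lower_spectrum \<theta> E =
    liminf (\<lambda>k. ereal (ln (real (\<Prod>i\<in>{k+1..l_index c \<theta> k}. nk i)) / ((1 - 1/\<theta>) * ln (delta c k))))"
proof -
  let ?L = "\<lambda>k. real (descendants_count \<theta> k)"
  have L_ge_1: "1 \<le> ?L k" for k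
    using prod_ge_1_nat[of nk k "l_index c \<theta> k", OF nk_pos] by (metis of_nat_1 of_nat_le_iff)
  have ratio_iff: "eventually (\<lambda>k. \<forall>s. s \<le> ln (?L k) / ((1 - 1/\<theta>) * ln (delta c k))
      \<longleftrightarrow> delta c k powr (s * (1 - 1/\<theta>)) \<le> ?L k) sequentially"
    using eventually_ge_at_top[of 1]
  proof (rule eventually_mono)
    fix k :: nat assume "1 \<le> k"
    then show "\<forall>s. s \<le> ln (?L k) / ((1 - 1/\<theta>) * ln (delta c k))
        \<longleftrightarrow> delta c k powr (s * (1 - 1/\<theta>)) \<le> ?L k"
      using le_ln_ratio_iff[OF delta_pos delta_less_1 _ \<theta>] L_ge_1[of k] by simp
  qed
  have "lower_spectrum \<theta> E = Sup (ereal ` {s. lower_exponent \<theta> E s})"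
    by (rule lower_spectrum_eq_Sup)
  also have "\<dots> = liminf (\<lambda>k. ereal (ln (?L k) / ((1 - 1/\<theta>) * ln (delta c k))))"
  proof (rule Sup_ereal_eq_liminf)
    have "delta c k powr (0 * (1 - 1/\<theta>)) \<le> ?L k" for k
      using L_ge_1[of k] delta_pos[of k] by simp
    then have "eventually (\<lambda>k. delta c k powr (0 * (1 - 1/\<theta>)) \<le> ?L k) sequentially"
      by simp
    then show "0 \<in> {s. lower_exponent \<theta> E s}" using lower_exponent_of_growth[OF \<theta>] by simp
  next
    fix s \<epsilon> :: real assume "s \<in> {s. lower_exponent \<theta> E s}" "0 < \<epsilon>"
    then have "eventually (\<lambda>k. delta c k powr ((s - \<epsilon>) * (1 - 1/\<theta>)) \<le> ?L k) sequentially"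
      using growth_of_lower_exponent[OF \<theta>] by simp
    then show "eventually (\<lambda>k. s - \<epsilon> \<le> ln (?L k) / ((1 - 1/\<theta>) * ln (delta c k))) sequentially"
      using ratio_iff by eventually_elim blast
  next
    fix s :: real assume "0 < s"
      and less: "eventually (\<lambda>k. s < ln (?L k) / ((1 - 1/\<theta>) * ln (delta c k))) sequentially"
    from less ratio_iff have "eventually (\<lambda>k. delta c k powr (s * (1 - 1/\<theta>)) \<le> ?L k) sequentially"
      by eventually_elim (auto dest: less_imp_le)
    then show "s \<in> {s. lower_exponent \<theta> E s}" using lower_exponent_of_growth[OF \<theta>] \<open>0 < s\<close> by simp
  qed
  finally show ?thesis .
qed

end

lemma cantor_like_class_construction:
  fixes J :: "'a::euclidean_space set"
  assumes "\<forall>k\<ge>1. a k > 0" "summable a" "\<forall>k\<ge>1. nk k \<ge> 2" "\<forall>k\<ge>1. 0 < c k \<and> c k < 1"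
    and "\<eta> > 0" "\<forall>k\<ge>1. c k \<ge> \<eta>" and "compact J" "interior J \<noteq> {}"
    and "E \<in> cantor_like_class J c nk a"
  obtains JS where "cantor_construction J c a nk JS E \<eta>"
proof -
  obtain JS :: "nat list \<Rightarrow> 'a set" where JS_Nil: "JS [] = J"
    and children: "\<forall>k\<ge>1. \<forall>\<sigma>\<in>words nk (k - 1).
           (\<forall>j\<in>{1..nk k}.
              JS (\<sigma> @ [j]) \<subseteq> JS \<sigma> \<and>
              geom_similar (JS \<sigma>) (JS (\<sigma> @ [j])) \<and>
              c k * (1 - a k) \<le> diameter (JS (\<sigma> @ [j])) / diameter (JS \<sigma>) \<and>
              diameter (JS (\<sigma> @ [j])) / diameter (JS \<sigma>) \<le> c k * (1 + a k)) \<and>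
           (\<forall>j\<in>{1..nk k}. \<forall>j'\<in>{1..nk k}. j \<noteq> j' \<longrightarrow>
              interior (JS (\<sigma> @ [j])) \<inter> interior (JS (\<sigma> @ [j'])) = {})"
    and E_eq: "E = (\<Inter>k\<in>{1..}. \<Union>\<sigma>\<in>words nk k. JS \<sigma>)"
    using assms(9) unfolding cantor_like_class_def by blast
  have child: "(\<forall>j\<in>{1..nk (Suc k)}.
        JS (\<sigma> @ [j]) \<subseteq> JS \<sigma> \<and> geom_similar (JS \<sigma>) (JS (\<sigma> @ [j])) \<and>
        c (Suc k) * (1 - a (Suc k)) \<le> diameter (JS (\<sigma> @ [j])) / diameter (JS \<sigma>) \<and>
        diameter (JS (\<sigma> @ [j])) / diameter (JS \<sigma>) \<le> c (Suc k) * (1 + a (Suc k))) \<and>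
      (\<forall>j\<in>{1..nk (Suc k)}. \<forall>j'\<in>{1..nk (Suc k)}. j \<noteq> j' \<longrightarrow>
        interior (JS (\<sigma> @ [j])) \<inter> interior (JS (\<sigma> @ [j'])) = {})"
    if "\<sigma> \<in> words nk k" for k \<sigma>
    using children[rule_format, of "Suc k" \<sigma>] that by simp
  have "cantor_construction J c a nk JS E \<eta>"
  proof unfold_locales
    fix k \<sigma> j assume "\<sigma> \<in> words nk k" "j \<in> {1..nk (Suc k)}"
    then show "JS (\<sigma> @ [j]) \<subseteq> JS \<sigma>" "geom_similar (JS \<sigma>) (JS (\<sigma> @ [j]))"
      "c (Suc k) * (1 - a (Suc k)) \<le> diameter (JS (\<sigma> @ [j])) / diameter (JS \<sigma>) \<and>
        diameter (JS (\<sigma> @ [j])) / diameter (JS \<sigma>) \<le> c (Suc k) * (1 + a (Suc k))"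
      using child by blast+
  next
    fix k \<sigma> j j' assume "\<sigma> \<in> words nk k" "j \<in> {1..nk (Suc k)}" "j' \<in> {1..nk (Suc k)}" "j \<noteq> j'"
    then show "interior (JS (\<sigma> @ [j])) \<inter> interior (JS (\<sigma> @ [j'])) = {}" using child by blast
  qed (use assms JS_Nil E_eq in auto)
  then show thesis by (rule that)
qed

theorem theorem4:
  fixes J :: "'a::euclidean_space set"
    and a c :: "nat \<Rightarrow> real" and nk :: "nat \<Rightarrow> nat" and \<theta> :: real and E :: "'a set"
  assumes a_pos: "\<forall>k\<ge>1. a k > 0" and a_sum: "summable a"
    and nk_ge: "\<forall>k\<ge>1. nk k \<ge> 2"
    and c_bounds: "\<forall>k\<ge>1. 0 < c k \<and> c k < 1"
    and c_inf: "\<exists>\<eta>>0. \<forall>k\<ge>1. c k \<ge> \<eta>"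
    and J_closed: "closed J" and J_bounded: "bounded J" and J_int: "interior J \<noteq> {}"
    and E_in: "E \<in> cantor_like_class J c nk a"
    and theta: "0 < \<theta>" "\<theta> < 1"
  shows "lower_spectrum \<theta> E =
    liminf (\<lambda>k. ereal (ln (real (\<Prod>i\<in>{k+1..l_index c \<theta> k}. nk i))
                     / ((1 - 1/\<theta>) * ln (delta c k))))"
proof -
  obtain \<eta> where \<eta>: "\<eta> > 0" "\<forall>k\<ge>1. c k \<ge> \<eta>" using c_inf by blast
  have "compact J" using J_closed J_bounded by (simp add: compact_eq_bounded_closed)
  then obtain JS where "cantor_construction J c a nk JS E \<eta>"
    by (rule cantor_like_class_construction[OF a_pos a_sum nk_ge c_bounds \<eta> _ J_int E_in])
  then show ?thesis using theta by (rule cantor_construction.lower_spectrum_eq)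
qed

end
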